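(* Let $M^{2n+1}(f,Q,\xi,\eta,g)$ be a weak $\beta$-Kenmotsu manifold with $\beta$ a nonzero constant, and suppose $\nabla_\xi\mathrm{Ric}^\sharp=0$. Then $(M,g)$ is an Einstein manifold with scalar curvature $r=-2n(2n+1)\beta^2$.
   Context: A weak almost contact metric structure on $M^{2n+1}$ consists of a $(1,1)$-tensor field $f$ of rank $2n$, a vector field $\xi$, a $1$-form $\eta$, a nonsingular $(1,1)$-tensor field $Q$ and a Riemannian metric $g$ such that $f^2=-Q+\eta\otimes\xi$, $\eta(\xi)=1$, $Q\xi=\xi$, $\ker\eta$ is $f$-invariant, and $g(fX,fY)=g(X,QY)-\eta(X)\eta(Y)$. It is weak $\beta$-Kenmotsu if $(\nabla_Xf)Y=\beta\{g(fX,Y)\xi-\eta(Y)fX\}$ for all $X,Y$, $\nabla$ the Levi-Civita connection. $R_{X,Y}Z=\nabla_X\nabla_YZ-\nabla_Y\nabla_XZ-\nabla_{[X,Y]}Z$, $\mathrm{Ric}(X,Y)=\operatorname{tr}(Z\mapsto R_{Z,X}Y)=g(\mathrm{Ric}^\sharp X,Y)$, $r=\operatorname{tr}_g\mathrm{Ric}$. *)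

theory Defs
  imports "HOL-Analysis.Analysis"
begin

text \<open>Local-coordinate model: the manifold is an open set U in real^'m (a chart),
  tensor fields are matrix/vector valued functions on U, the metric g is a
  symmetric positive definite matrix field, the Levi-Civita connection is given
  by the Christoffel symbols of g.\<close>

fun pder :: "'m::finite list \<Rightarrow> (real^'m \<Rightarrow> 'b::real_normed_vector) \<Rightarrow> real^'m \<Rightarrow> 'b" where
  "pder [] F = F"
| "pder (k # ks) F = (\<lambda>x. frechet_derivative (pder ks F) (at x) (axis k 1))"

definition smooth_on :: "(real^'m::finite) set \<Rightarrow> (real^'m \<Rightarrow> 'b::real_normed_vector) \<Rightarrow> bool" where
  "smooth_on U F \<longleftrightarrow> (\<forall>ks. \<forall>x\<in>U. pder ks F differentiable (at x))"

definition dirD :: "(real^'m::finite \<Rightarrow> 'b::real_normed_vector) \<Rightarrow> (real^'m \<Rightarrow> real^'m) \<Rightarrow> real^'m \<Rightarrow> 'b" where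
  "dirD F X x = frechet_derivative F (at x) (X x)"

definition gmet :: "real^'m^'m \<Rightarrow> real^'m \<Rightarrow> real^'m \<Rightarrow> real" where
  "gmet G u v = u \<bullet> (G *v v)"

definition riemannian_metric_on :: "(real^'m::finite) set \<Rightarrow> (real^'m \<Rightarrow> real^'m^'m) \<Rightarrow> bool" where
  "riemannian_metric_on U g \<longleftrightarrow> smooth_on U g \<and>
     (\<forall>x\<in>U. transpose (g x) = g x \<and> (\<forall>v. v \<noteq> 0 \<longrightarrow> gmet (g x) v v > 0))"

definition christoffel :: "(real^'m::finite \<Rightarrow> real^'m^'m) \<Rightarrow> real^'m \<Rightarrow> 'm \<Rightarrow> 'm \<Rightarrow> 'm \<Rightarrow> real" where
  "christoffel g x k i j = (1/2) * (\<Sum>l\<in>UNIV. matrix_inv (g x) $ k $ l *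
      (pder [i] (\<lambda>y. g y $ j $ l) x + pder [j] (\<lambda>y. g y $ i $ l) x - pder [l] (\<lambda>y. g y $ i $ j) x))"

definition nabla :: "(real^'m::finite \<Rightarrow> real^'m^'m) \<Rightarrow> (real^'m \<Rightarrow> real^'m) \<Rightarrow> (real^'m \<Rightarrow> real^'m) \<Rightarrow> real^'m \<Rightarrow> real^'m" where
  "nabla g X Y x = dirD Y X x + (\<chi> k. \<Sum>i\<in>UNIV. \<Sum>j\<in>UNIV. christoffel g x k i j * X x $ i * Y x $ j)"

definition lie :: "(real^'m::finite \<Rightarrow> real^'m) \<Rightarrow> (real^'m \<Rightarrow> real^'m) \<Rightarrow> real^'m \<Rightarrow> real^'m" where
  "lie X Y x = dirD Y X x - dirD X Y x"

definition curv :: "(real^'m::finite \<Rightarrow> real^'m^'m) \<Rightarrow> (real^'m \<Rightarrow> real^'m) \<Rightarrow> (real^'m \<Rightarrow> real^'m) \<Rightarrow> (real^'m \<Rightarrow> real^'m) \<Rightarrow> real^'m \<Rightarrow> real^'m" where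
  "curv g X Y Z x = nabla g X (nabla g Y Z) x - nabla g Y (nabla g X Z) x - nabla g (lie X Y) Z x"

definition coord :: "'m::finite \<Rightarrow> real^'m \<Rightarrow> real^'m" where
  "coord k = (\<lambda>_. axis k 1)"

definition ricci :: "(real^'m::finite \<Rightarrow> real^'m^'m) \<Rightarrow> (real^'m \<Rightarrow> real^'m) \<Rightarrow> (real^'m \<Rightarrow> real^'m) \<Rightarrow> real^'m \<Rightarrow> real" where
  "ricci g X Y x = (\<Sum>k\<in>UNIV. curv g (coord k) X Y x $ k)"

definition ricci_mat :: "(real^'m::finite \<Rightarrow> real^'m^'m) \<Rightarrow> real^'m \<Rightarrow> real^'m^'m" where
  "ricci_mat g x = (\<chi> i j. ricci g (coord i) (coord j) x)"

text \<open>Ric^sharp, defined by g(Ric^sharp X, Y) = Ric(X,Y).\<close>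
definition ricci_sharp :: "(real^'m::finite \<Rightarrow> real^'m^'m) \<Rightarrow> real^'m \<Rightarrow> real^'m^'m" where
  "ricci_sharp g x = matrix_inv (g x) ** transpose (ricci_mat g x)"

definition scal :: "(real^'m::finite \<Rightarrow> real^'m^'m) \<Rightarrow> real^'m \<Rightarrow> real" where
  "scal g x = (\<Sum>i\<in>UNIV. \<Sum>j\<in>UNIV. matrix_inv (g x) $ i $ j * ricci_mat g x $ i $ j)"

text \<open>Weak almost contact metric structure (f,Q,xi,eta,g) on U, dim = 2n+1.
  eta is represented by its component vector: eta(X) = eta \<bullet> X.\<close>
definition weak_almost_contact_metric :: "nat \<Rightarrow> (real^'m::finite) set \<Rightarrow> (real^'m \<Rightarrow> real^'m^'m) \<Rightarrow>
    (real^'m \<Rightarrow> real^'m^'m) \<Rightarrow> (real^'m \<Rightarrow> real^'m) \<Rightarrow> (real^'m \<Rightarrow> real^'m) \<Rightarrow> (real^'m \<Rightarrow> real^'m^'m) \<Rightarrow> bool" where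
  "weak_almost_contact_metric n U f Q \<xi> \<eta> g \<longleftrightarrow>
     CARD('m) = 2 * n + 1 \<and> open U \<and>
     smooth_on U f \<and> smooth_on U Q \<and> smooth_on U \<xi> \<and> smooth_on U \<eta> \<and> riemannian_metric_on U g \<and>
     (\<forall>x\<in>U.
        rank (f x) = 2 * n \<and>
        f x ** f x = - Q x + (\<chi> i j. \<xi> x $ i * \<eta> x $ j) \<and>
        \<eta> x \<bullet> \<xi> x = 1 \<and>
        Q x *v \<xi> x = \<xi> x \<and>
        invertible (Q x) \<and>
        (\<forall>v. \<eta> x \<bullet> v = 0 \<longrightarrow> \<eta> x \<bullet> (f x *v v) = 0) \<and>
        (\<forall>u v. gmet (g x) (f x *v u) (f x *v v) = gmet (g x) u (Q x *v v) - (\<eta> x \<bullet> u) * (\<eta> x \<bullet> v)))"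

definition weak_beta_kenmotsu :: "nat \<Rightarrow> (real^'m::finite) set \<Rightarrow> real \<Rightarrow> (real^'m \<Rightarrow> real^'m^'m) \<Rightarrow>
    (real^'m \<Rightarrow> real^'m^'m) \<Rightarrow> (real^'m \<Rightarrow> real^'m) \<Rightarrow> (real^'m \<Rightarrow> real^'m) \<Rightarrow> (real^'m \<Rightarrow> real^'m^'m) \<Rightarrow> bool" where
  "weak_beta_kenmotsu n U \<beta> f Q \<xi> \<eta> g \<longleftrightarrow>
     weak_almost_contact_metric n U f Q \<xi> \<eta> g \<and>
     (\<forall>X Y. smooth_on U X \<longrightarrow> smooth_on U Y \<longrightarrow> (\<forall>x\<in>U.
        nabla g X (\<lambda>y. f y *v Y y) x - f x *v nabla g X Y x
          = \<beta> *\<^sub>R (gmet (g x) (f x *v X x) (Y x) *\<^sub>R \<xi> x - (\<eta> x \<bullet> Y x) *\<^sub>R (f x *v X x))))"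

end

theory Submission
  imports Defs
begin

text \<open>
  In a chart, the weak \<open>\<beta>\<close>-Kenmotsu condition applied to \<open>Y = \<xi>\<close> forces
  \<open>\<nabla>\<^sub>X \<xi> = \<beta> (X - \<eta>(X) \<xi>)\<close> (because \<open>f \<xi> = 0\<close> and the kernel of \<open>f\<close> is spanned by \<open>\<xi>\<close>).
  Differentiating once more gives \<open>R(X,Y)\<xi> = \<beta>\<^sup>2 (\<eta>(X) Y - \<eta>(Y) X)\<close>, hence, by the pair
  symmetry of the curvature tensor, \<open>R(X,\<xi>)Z = \<beta>\<^sup>2 (g(X,Z) \<xi> - \<eta>(Z) X)\<close>.
  Contracting the second Bianchi identity with \<open>\<xi>\<close> and inserting these formulas yields
  \<open>\<nabla>\<^sub>\<xi> Ric = -2\<beta> Ric - 4n\<beta>\<^sup>3 g\<close>. The hypothesis \<open>\<nabla>\<^sub>\<xi> Ric\<^sup>\<sharp> = 0\<close> makes the left-hand side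
  vanish, so \<open>Ric = -2n\<beta>\<^sup>2 g\<close> as \<open>\<beta> \<noteq> 0\<close>, and tracing gives the scalar curvature.
\<close>

section \<open>Partial derivatives and smoothness in a chart\<close>

lemmas has_frechet_derivative = frechet_derivative_works[THEN iffD1]

lemma has_derivative_eq_on_open_iff:
  assumes "open U" "x \<in> U" "\<forall>y\<in>U. F y = H y"
  shows "(F has_derivative D) (at x) \<longleftrightarrow> (H has_derivative D) (at x)"
  using assms has_derivative_transform_within_open[of F D x UNIV U H]
    has_derivative_transform_within_open[of H D x UNIV U F] by auto

lemma frechet_derivative_eq_on_open:
  assumes "open U" "x \<in> U" "\<forall>y\<in>U. F y = H y"
  shows "frechet_derivative F (at x) = frechet_derivative H (at x)"
  unfolding frechet_derivative_def using has_derivative_eq_on_open_iff[OF assms] by simp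

lemma differentiable_eq_on_open:
  assumes "open U" "x \<in> U" "\<forall>y\<in>U. F y = H y"
  shows "F differentiable (at x) \<longleftrightarrow> H differentiable (at x)"
  unfolding differentiable_def using has_derivative_eq_on_open_iff[OF assms] by simp

lemma pder_eq_on_open:
  assumes "open U" "\<forall>y\<in>U. F y = H y" "x \<in> U"
  shows "pder ks F x = pder ks H x"
  using assms(3)
proof (induction ks arbitrary: x)
  case Nil then show ?case using assms(2) by simp
next
  case (Cons k ks)
  have "\<forall>y\<in>U. pder ks F y = pder ks H y" using Cons.IH by blast
  then have "frechet_derivative (pder ks F) (at x) = frechet_derivative (pder ks H) (at x)"
    by (rule frechet_derivative_eq_on_open[OF assms(1) Cons.prems])
  then show ?case by simp
qed

lemma pder_append: "pder ks (pder [k] F) = pder (ks @ [k]) F"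
  by (induction ks) auto

lemma pder_pder: "pder [a] (pder [b] F) = pder [a,b] F"
  using pder_append[of "[a]" b F] by simp

lemma pder_single: "pder [k] F x = frechet_derivative F (at x) (axis k 1)"
  by simp

declare pder.simps(2) [simp del]

lemma pder_const [simp]: "pder [k] (\<lambda>y. c) x = 0"
  by (simp add: pder_single)

lemma has_derivative_pder: "(F has_derivative D) (at x) \<Longrightarrow> pder [k] F x = D (axis k 1)"
  using frechet_derivative_at by (force simp: pder_single)

lemma differentiable_bounded_linear:
  "bounded_linear L \<Longrightarrow> F differentiable at x \<Longrightarrow> (\<lambda>y. L (F y)) differentiable at x"
  by (rule differentiable_compose[of L]) (auto intro: bounded_linear_imp_differentiable)

lemma differentiable_bounded_bilinear:
  "bounded_bilinear P \<Longrightarrow> F differentiable at x \<Longrightarrow> H differentiable at x \<Longrightarrow>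
   (\<lambda>y. P (F y) (H y)) differentiable at x"
  unfolding differentiable_def using bounded_bilinear.FDERIV by blast

lemma pder_linear:
  assumes "bounded_linear L" "F differentiable at x"
  shows "pder [k] (\<lambda>y. L (F y)) x = L (pder [k] F x)"
  using has_derivative_pder[OF bounded_linear.has_derivative[OF assms(1) has_frechet_derivative[OF assms(2)]]]
  by (simp add: pder_single)

lemma pder_add:
  assumes "F differentiable at x" "H differentiable at x"
  shows "pder [k] (\<lambda>y. F y + H y) x = pder [k] F x + pder [k] H x"
  using has_derivative_pder[OF has_derivative_add[OF has_frechet_derivative[OF assms(1)]
      has_frechet_derivative[OF assms(2)]]]
  by (simp add: pder_single)

lemma pder_diff:
  assumes "F differentiable at x" "H differentiable at x"
  shows "pder [k] (\<lambda>y. F y - H y) x = pder [k] F x - pder [k] H x"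
  using has_derivative_pder[OF has_derivative_diff[OF has_frechet_derivative[OF assms(1)]
      has_frechet_derivative[OF assms(2)]]]
  by (simp add: pder_single)

lemma pder_bilinear:
  assumes "bounded_bilinear P" "F differentiable at x" "H differentiable at x"
  shows "pder [k] (\<lambda>y. P (F y) (H y)) x = P (pder [k] F x) (H x) + P (F x) (pder [k] H x)"
  using has_derivative_pder[OF bounded_bilinear.FDERIV[OF assms(1)
      has_frechet_derivative[OF assms(2)] has_frechet_derivative[OF assms(3)]]]
  by (simp add: pder_single add.commute)

lemma pder_sum:
  "finite S \<Longrightarrow> (\<And>i. i \<in> S \<Longrightarrow> F i differentiable at x) \<Longrightarrow>
   pder [k] (\<lambda>y. \<Sum>i\<in>S. F i y) x = (\<Sum>i\<in>S. pder [k] (F i) x)"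
proof (induction S rule: finite_induct)
  case empty then show ?case by simp
next
  case (insert a S)
  have "(\<lambda>y. \<Sum>i\<in>S. F i y) differentiable at x"
    using insert.prems by (intro differentiable_sum) (auto simp: insert.hyps)
  then show ?case using insert pder_add[of "F a" x "\<lambda>y. \<Sum>i\<in>S. F i y" k] by simp
qed

lemma pder_scaleR_const: "F differentiable at x \<Longrightarrow> pder [k] (\<lambda>y. c *\<^sub>R F y) x = c *\<^sub>R pder [k] F x"
  by (rule pder_linear[OF bounded_linear_scaleR_right])

lemma pder_minus: "F differentiable at x \<Longrightarrow> pder [k] (\<lambda>y. - F y) x = - pder [k] F x"
  by (rule pder_linear[OF bounded_linear_minus[OF bounded_linear_ident]])

lemma pder_component: "v differentiable at x \<Longrightarrow> pder [k] (\<lambda>y. v y $ i) x = pder [k] v x $ i"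
  by (rule pder_linear[OF bounded_linear_vec_nth])

lemma pder_entry: "F differentiable at y \<Longrightarrow> pder [k] (\<lambda>y. F y $ i $ j) y = pder [k] F y $ i $ j"
  by (simp add: pder_component differentiable_bounded_linear[OF bounded_linear_vec_nth])

lemma pder_scaleR:
  "(c::_\<Rightarrow>real) differentiable at x \<Longrightarrow> v differentiable at x \<Longrightarrow>
   pder [k] (\<lambda>y. c y *\<^sub>R v y) x = pder [k] c x *\<^sub>R v x + c x *\<^sub>R pder [k] v x"
  by (rule pder_bilinear[OF bounded_bilinear_scaleR])

lemma pder_inner:
  "v differentiable at x \<Longrightarrow> w differentiable at x \<Longrightarrow>
   pder [k] (\<lambda>y. v y \<bullet> w y) x = pder [k] v x \<bullet> w x + v x \<bullet> pder [k] w x"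
  by (rule pder_bilinear[OF bounded_bilinear_inner])

lemma dirD_eq_sum_pder:
  assumes "Y differentiable at x"
  shows "dirD Y X x = (\<Sum>a\<in>UNIV. X x $ a *\<^sub>R pder [a] Y x)"
proof -
  have lin: "linear (frechet_derivative Y (at x))" using assms linear_frechet_derivative by blast
  have "dirD Y X x = frechet_derivative Y (at x) (\<Sum>a\<in>UNIV. X x $ a *\<^sub>R axis a 1)"
    unfolding dirD_def using basis_expansion[of "X x"] by (simp add: scalar_mult_eq_scaleR)
  also have "\<dots> = (\<Sum>a\<in>UNIV. X x $ a *\<^sub>R pder [a] Y x)"
    by (simp add: linear_sum[OF lin] linear_scale[OF lin] pder_single)
  finally show ?thesis .
qed

text \<open>Closure properties of \<^const>\<open>smooth_on\<close> are proved by induction on the order \<open>N\<close>.\<close>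

definition smooth_upto ::
    "nat \<Rightarrow> (real^'m::finite) set \<Rightarrow> (real^'m \<Rightarrow> 'b::real_normed_vector) \<Rightarrow> bool" where
  "smooth_upto N U F \<longleftrightarrow> (\<forall>ks. length ks \<le> N \<longrightarrow> (\<forall>x\<in>U. pder ks F differentiable (at x)))"

lemma smooth_on_iff_smooth_upto: "smooth_on U F \<longleftrightarrow> (\<forall>N. smooth_upto N U F)"
  unfolding smooth_on_def smooth_upto_def by auto

lemma smooth_upto_0_iff: "smooth_upto 0 U F \<longleftrightarrow> (\<forall>x\<in>U. F differentiable (at x))"
  unfolding smooth_upto_def by auto

lemma smooth_upto_Suc_iff:
  "smooth_upto (Suc N) U F \<longleftrightarrow>
     (\<forall>x\<in>U. F differentiable (at x)) \<and> (\<forall>k. smooth_upto N U (pder [k] F))"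
proof
  assume A: "smooth_upto (Suc N) U F"
  show "(\<forall>x\<in>U. F differentiable (at x)) \<and> (\<forall>k. smooth_upto N U (pder [k] F))"
  proof
    show "\<forall>x\<in>U. F differentiable (at x)" using A unfolding smooth_upto_def
      by (metis le0 list.size(3) pder.simps(1))
    show "\<forall>k. smooth_upto N U (pder [k] F)" using A unfolding smooth_upto_def pder_append
      by (metis Suc_le_mono length_append_singleton)
  qed
next
  assume A: "(\<forall>x\<in>U. F differentiable (at x)) \<and> (\<forall>k. smooth_upto N U (pder [k] F))"
  show "smooth_upto (Suc N) U F" unfolding smooth_upto_def
  proof (intro allI impI)
    fix ks :: "'a list" assume "length ks \<le> Suc N"
    then show "\<forall>x\<in>U. pder ks F differentiable at x"
    proof (cases ks rule: rev_exhaust)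
      case Nil then show ?thesis using A by simp
    next
      case (snoc ys k)
      then have "length ys \<le> N" using \<open>length ks \<le> Suc N\<close> by simp
      then show ?thesis using A snoc unfolding smooth_upto_def by (metis pder_append)
    qed
  qed
qed

lemma smooth_upto_SucD: "smooth_upto (Suc N) U F \<Longrightarrow> smooth_upto N U F"
  unfolding smooth_upto_def by auto

lemma smooth_upto_cong:
  assumes "open U" "\<forall>y\<in>U. F y = H y" "smooth_upto N U F"
  shows "smooth_upto N U H"
  unfolding smooth_upto_def
proof (intro allI impI ballI)
  fix ks :: "'a list" and x assume "length ks \<le> N" "x \<in> U"
  then have "pder ks F differentiable at x" using assms(3) unfolding smooth_upto_def by auto
  moreover have "\<forall>y\<in>U. pder ks F y = pder ks H y" using pder_eq_on_open[OF assms(1,2)] by blast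
  ultimately show "pder ks H differentiable at x"
    using differentiable_eq_on_open[OF assms(1) \<open>x \<in> U\<close>] by blast
qed

lemma pder_Cons_const: "pder (k # ks) (\<lambda>y. c) = (\<lambda>y. 0)"
  by (induction ks arbitrary: k) (simp_all add: pder.simps(2))

lemma smooth_upto_const: "smooth_upto N U (\<lambda>y. c)"
  unfolding smooth_upto_def
proof (intro allI impI ballI)
  fix ks :: "'a list" and x
  show "pder ks (\<lambda>y. c) differentiable at x" by (cases ks) (simp_all add: pder_Cons_const)
qed

lemma smooth_upto_linear:
  assumes "open U" "bounded_linear L"
  shows "smooth_upto N U F \<Longrightarrow> smooth_upto N U (\<lambda>y. L (F y))"
proof (induction N arbitrary: F)
  case 0 then show ?case
    unfolding smooth_upto_0_iff using differentiable_bounded_linear[OF assms(2)] by blast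
next
  case (Suc N)
  have d: "\<forall>x\<in>U. F differentiable at x" using Suc.prems smooth_upto_Suc_iff by blast
  have "smooth_upto N U (pder [k] (\<lambda>y. L (F y)))" for k
  proof -
    have "smooth_upto N U (pder [k] F)" using Suc.prems smooth_upto_Suc_iff by blast
    then have sm: "smooth_upto N U (\<lambda>y. L (pder [k] F y))" by (rule Suc.IH)
    have eq: "\<forall>y\<in>U. L (pder [k] F y) = pder [k] (\<lambda>y. L (F y)) y"
      using d pder_linear[OF assms(2), symmetric] by blast
    show ?thesis using smooth_upto_cong[OF assms(1) eq sm] by simp
  qed
  then show ?case
    unfolding smooth_upto_Suc_iff using d differentiable_bounded_linear[OF assms(2)] by blast
qed

lemma smooth_upto_add:
  assumes "open U"
  shows "smooth_upto N U F \<Longrightarrow> smooth_upto N U H \<Longrightarrow> smooth_upto N U (\<lambda>y. F y + H y)"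
proof (induction N arbitrary: F H)
  case 0 then show ?case unfolding smooth_upto_0_iff using differentiable_add by blast
next
  case (Suc N)
  have d: "\<forall>x\<in>U. F differentiable at x" "\<forall>x\<in>U. H differentiable at x"
    using Suc.prems smooth_upto_Suc_iff by blast+
  have "smooth_upto N U (pder [k] (\<lambda>y. F y + H y))" for k
  proof -
    have "smooth_upto N U (pder [k] F)" "smooth_upto N U (pder [k] H)"
      using Suc.prems smooth_upto_Suc_iff by blast+
    then have sm: "smooth_upto N U (\<lambda>y. pder [k] F y + pder [k] H y)" by (rule Suc.IH)
    have eq: "\<forall>y\<in>U. pder [k] F y + pder [k] H y = pder [k] (\<lambda>y. F y + H y) y"
      using d pder_add[symmetric] by blast
    show ?thesis using smooth_upto_cong[OF assms(1) eq sm] by simp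
  qed
  then show ?case unfolding smooth_upto_Suc_iff using d differentiable_add by blast
qed

lemma smooth_upto_bilinear:
  assumes "open U" "bounded_bilinear P"
  shows "smooth_upto N U F \<Longrightarrow> smooth_upto N U H \<Longrightarrow> smooth_upto N U (\<lambda>y. P (F y) (H y))"
proof (induction N arbitrary: F H)
  case 0 then show ?case unfolding smooth_upto_0_iff
    using differentiable_bounded_bilinear[OF assms(2)] by blast
next
  case (Suc N)
  have d: "\<forall>x\<in>U. F differentiable at x" "\<forall>x\<in>U. H differentiable at x"
    using Suc.prems smooth_upto_Suc_iff by blast+
  have "smooth_upto N U (pder [k] (\<lambda>y. P (F y) (H y)))" for k
  proof -
    have a: "smooth_upto N U (pder [k] F)" "smooth_upto N U (pder [k] H)"
      using Suc.prems smooth_upto_Suc_iff by blast+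
    have b: "smooth_upto N U F" "smooth_upto N U H" using Suc.prems smooth_upto_SucD by blast+
    have sm: "smooth_upto N U (\<lambda>y. P (pder [k] F y) (H y) + P (F y) (pder [k] H y))"
      using smooth_upto_add[OF assms(1) Suc.IH[OF a(1) b(2)] Suc.IH[OF b(1) a(2)]] .
    have eq: "\<forall>y\<in>U. P (pder [k] F y) (H y) + P (F y) (pder [k] H y) = pder [k] (\<lambda>y. P (F y) (H y)) y"
      using d pder_bilinear[OF assms(2), symmetric] by blast
    show ?thesis using smooth_upto_cong[OF assms(1) eq sm] by simp
  qed
  then show ?case
    unfolding smooth_upto_Suc_iff using d differentiable_bounded_bilinear[OF assms(2)] by blast
qed

lemma smooth_upto_inverse:
  fixes h :: "real^'m::finite \<Rightarrow> real"
  assumes "open U" "\<forall>y\<in>U. h y \<noteq> 0"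
  shows "smooth_upto N U h \<Longrightarrow> smooth_upto N U (\<lambda>y. inverse (h y))"
proof (induction N)
  case 0 then show ?case
    using assms(2) differentiable_inverse unfolding smooth_upto_0_iff by blast
next
  case (Suc N)
  have d: "\<forall>x\<in>U. h differentiable at x" using Suc.prems smooth_upto_Suc_iff by blast
  have "smooth_upto N U (pder [k] (\<lambda>y. inverse (h y)))" for k
  proof -
    have a: "smooth_upto N U (pder [k] h)" "smooth_upto N U h"
      using Suc.prems smooth_upto_Suc_iff smooth_upto_SucD by blast+
    have "smooth_upto N U (\<lambda>y. inverse (h y) * inverse (h y))"
      using smooth_upto_bilinear[OF assms(1) bounded_bilinear_mult] Suc.IH[OF a(2)] by blast
    then have "smooth_upto N U (\<lambda>y. pder [k] h y * (inverse (h y) * inverse (h y)))"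
      using smooth_upto_bilinear[OF assms(1) bounded_bilinear_mult a(1)] by blast
    then have sm: "smooth_upto N U (\<lambda>y. - (pder [k] h y * (inverse (h y) * inverse (h y))))"
      using smooth_upto_linear[OF assms(1) bounded_linear_minus[OF bounded_linear_ident]] by blast
    have eq: "\<forall>y\<in>U. - (pder [k] h y * (inverse (h y) * inverse (h y))) = pder [k] (\<lambda>y. inverse (h y)) y"
    proof
      fix y assume y: "y \<in> U"
      have "((\<lambda>y. inverse (h y)) has_derivative
              (\<lambda>v. - (inverse (h y) * frechet_derivative h (at y) v * inverse (h y)))) (at y)"
        using Deriv.has_derivative_inverse[OF _ has_frechet_derivative[of h "at y"]] assms(2) d y by blast
      then show "- (pder [k] h y * (inverse (h y) * inverse (h y))) = pder [k] (\<lambda>y. inverse (h y)) y"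
        using has_derivative_pder by (fastforce simp: pder_single algebra_simps)
    qed
    show ?thesis using smooth_upto_cong[OF assms(1) eq sm] by simp
  qed
  then show ?case unfolding smooth_upto_Suc_iff using d assms(2) differentiable_inverse by blast
qed

lemma smooth_on_differentiable: "smooth_on U F \<Longrightarrow> x \<in> U \<Longrightarrow> F differentiable at x"
  unfolding smooth_on_def by (metis pder.simps(1))

lemma smooth_on_pder: "smooth_on U F \<Longrightarrow> smooth_on U (pder [k] F)"
  unfolding smooth_on_iff_smooth_upto using smooth_upto_Suc_iff by blast

lemma smooth_on_cong: "open U \<Longrightarrow> \<forall>y\<in>U. F y = H y \<Longrightarrow> smooth_on U F \<Longrightarrow> smooth_on U H"
  unfolding smooth_on_iff_smooth_upto using smooth_upto_cong by blast

lemma smooth_on_const: "smooth_on U (\<lambda>y. c)"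
  unfolding smooth_on_iff_smooth_upto using smooth_upto_const by blast

lemma smooth_on_linear: "open U \<Longrightarrow> bounded_linear L \<Longrightarrow> smooth_on U F \<Longrightarrow> smooth_on U (\<lambda>y. L (F y))"
  unfolding smooth_on_iff_smooth_upto using smooth_upto_linear by blast

lemma smooth_on_add: "open U \<Longrightarrow> smooth_on U F \<Longrightarrow> smooth_on U H \<Longrightarrow> smooth_on U (\<lambda>y. F y + H y)"
  unfolding smooth_on_iff_smooth_upto using smooth_upto_add by blast

lemma smooth_on_bilinear:
  "open U \<Longrightarrow> bounded_bilinear P \<Longrightarrow> smooth_on U F \<Longrightarrow> smooth_on U H \<Longrightarrow>
   smooth_on U (\<lambda>y. P (F y) (H y))"
  unfolding smooth_on_iff_smooth_upto using smooth_upto_bilinear by blast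

lemma smooth_on_inverse:
  "open U \<Longrightarrow> \<forall>y\<in>U. h y \<noteq> 0 \<Longrightarrow> smooth_on U h \<Longrightarrow> smooth_on U (\<lambda>y. inverse (h y :: real))"
  unfolding smooth_on_iff_smooth_upto using smooth_upto_inverse by blast

lemma smooth_on_sum:
  assumes "open U" "finite S" "\<And>i. i \<in> S \<Longrightarrow> smooth_on U (F i)"
  shows "smooth_on U (\<lambda>y. \<Sum>i\<in>S. F i y)"
  using assms(2,3)
proof (induction S)
  case empty then show ?case using smooth_on_const by simp
next
  case (insert a S)
  then show ?case using smooth_on_add[OF assms(1), of "F a" "\<lambda>y. \<Sum>i\<in>S. F i y"] by simp
qed

lemma smooth_on_minus: "open U \<Longrightarrow> smooth_on U F \<Longrightarrow> smooth_on U (\<lambda>y. - F y)"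
  using smooth_on_linear[OF _ bounded_linear_minus[OF bounded_linear_ident]] by blast

lemma smooth_on_diff: "open U \<Longrightarrow> smooth_on U F \<Longrightarrow> smooth_on U H \<Longrightarrow> smooth_on U (\<lambda>y. F y - H y)"
  using smooth_on_add[of U F "\<lambda>y. - H y"] smooth_on_minus[of U H] by simp

lemma smooth_on_mult: "open U \<Longrightarrow> smooth_on U F \<Longrightarrow> smooth_on U H \<Longrightarrow> smooth_on U (\<lambda>y. F y * H y :: real)"
  using smooth_on_bilinear[OF _ bounded_bilinear_mult] by blast

lemma smooth_on_prod:
  assumes "open U" "finite S" "\<And>i. i \<in> S \<Longrightarrow> smooth_on U (F i)"
  shows "smooth_on U (\<lambda>y. \<Prod>i\<in>S. F i y :: real)"
  using assms(2,3)
proof (induction S)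
  case empty then show ?case using smooth_on_const by simp
next
  case (insert a S)
  then show ?case using smooth_on_mult[OF assms(1), of "F a" "\<lambda>y. \<Prod>i\<in>S. F i y"] by simp
qed

lemma smooth_on_component: "open U \<Longrightarrow> smooth_on U F \<Longrightarrow> smooth_on U (\<lambda>y. F y $ i)"
  using smooth_on_linear[OF _ bounded_linear_vec_nth] by blast

lemma bounded_linear_axis: "bounded_linear (axis i :: 'b::euclidean_space \<Rightarrow> 'b^'n::finite)"
proof -
  have "linear (axis i :: 'b::euclidean_space \<Rightarrow> 'b^'n::finite)"
    by (auto simp: linear_iff axis_def vec_eq_iff)
  then show ?thesis by (simp add: linear_conv_bounded_linear)
qed

lemma sum_axis_components: "(\<Sum>i\<in>UNIV. axis i (v $ i)) = (v::'b::real_normed_vector^'n::finite)"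
proof -
  have "(\<Sum>i\<in>UNIV. axis i (v $ i) $ j) = v $ j" for j
  proof -
    have "(\<Sum>i\<in>UNIV. axis i (v $ i) $ j) = (\<Sum>i\<in>UNIV. if i = j then v $ j else 0)"
      by (rule sum.cong) (auto simp: axis_def)
    then show ?thesis by simp
  qed
  then show ?thesis by (simp add: vec_eq_iff sum_component)
qed

lemma smooth_on_vec:
  fixes F :: "real^'m::finite \<Rightarrow> 'b::euclidean_space^'n::finite"
  assumes U: "open U" and c: "\<And>i. smooth_on U (\<lambda>y. F y $ i)"
  shows "smooth_on U F"
proof -
  have "smooth_on U (\<lambda>y. \<Sum>i\<in>UNIV. axis i (F y $ i))"
    by (intro smooth_on_sum[OF U finite_class.finite_UNIV] smooth_on_linear[OF U bounded_linear_axis c])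
  then show ?thesis by (simp add: sum_axis_components)
qed

lemma smooth_on_matrix:
  assumes U: "open U" and e: "\<And>i j. smooth_on U (\<lambda>y. (A y :: real^'n::finite^'m::finite) $ i $ j)"
  shows "smooth_on U A"
proof (rule smooth_on_vec[OF U])
  fix i show "smooth_on U (\<lambda>y. A y $ i)" by (rule smooth_on_vec[OF U]) (rule e)
qed

lemma smooth_on_entry: "open U \<Longrightarrow> smooth_on U A \<Longrightarrow> smooth_on U (\<lambda>y. A y $ i $ j)"
  by (intro smooth_on_component)

section \<open>Symmetry of second partial derivatives\<close>

lemma has_derivative_along_axis:
  assumes "F differentiable at (q + s *\<^sub>R axis a 1)"
  shows "((\<lambda>s. F (q + s *\<^sub>R axis a 1)) has_derivative (\<lambda>t. t *\<^sub>R pder [a] F (q + s *\<^sub>R axis a 1)))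
           (at s within S)"
proof -
  let ?D = "frechet_derivative F (at (q + s *\<^sub>R axis a 1))"
  have "((\<lambda>s. q + s *\<^sub>R axis a 1) has_derivative (\<lambda>t. t *\<^sub>R axis a 1)) (at s within S)"
    by (auto intro!: derivative_eq_intros)
  from has_derivative_in_compose[OF this has_derivative_at_withinI[OF has_frechet_derivative[OF assms]]]
  have "((\<lambda>s. F (q + s *\<^sub>R axis a 1)) has_derivative (\<lambda>t. ?D (t *\<^sub>R axis a 1))) (at s within S)"
    by (simp add: o_def)
  moreover have "?D (t *\<^sub>R axis a 1) = t *\<^sub>R pder [a] F (q + s *\<^sub>R axis a 1)" for t
    using linear_scale[OF linear_frechet_derivative[OF assms]] by (simp add: pder_single)
  ultimately show ?thesis by simp
qed

lemma linear_approx_increment: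
  assumes "linear D" "\<forall>y. norm (y - x) < d \<longrightarrow> norm (G y - G x - D (y - x)) \<le> e * norm (y - x)"
    and "norm (p - x) < d" "norm (q - x) < d"
  shows "norm (G p - G q - D (p - q)) \<le> e * norm (p - x) + e * norm (q - x)"
proof -
  have "G p - G q - D (p - q) = (G p - G x - D (p - x)) - (G q - G x - D (q - x))"
    using linear_diff[OF assms(1), of "p - x" "q - x"] by (simp add: algebra_simps)
  then have "norm (G p - G q - D (p - q)) \<le> norm (G p - G x - D (p - x)) + norm (G q - G x - D (q - x))"
    by (simp only: norm_triangle_ineq4)
  also have "\<dots> \<le> e * norm (p - x) + e * norm (q - x)"
    using assms(2-4) by (intro add_mono) auto
  finally show ?thesis .
qed

text \<open>
  The mean value inequality applied to \<open>s \<mapsto> F(x + s e\<^sub>a + h e\<^sub>b) - F(x + s e\<^sub>a) - s h D e\<^sub>b\<close>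
  on \<open>[0, h]\<close>, where \<open>D\<close> approximates the derivative of \<open>\<partial>\<^sub>a F\<close> at \<open>x\<close> to within \<open>e\<close>.
\<close>

lemma second_difference_bound:
  fixes F :: "real^'m::finite \<Rightarrow> 'b::real_normed_vector"
  assumes dF: "\<forall>y\<in>ball x r. F differentiable at y" and lin: "linear D"
    and approx: "\<forall>y. norm (y - x) < r \<longrightarrow>
                   norm (pder [a] F y - pder [a] F x - D (y - x)) \<le> e * norm (y - x)"
    and e: "e \<ge> 0" and h: "0 < h" "2 * h < r"
  shows "norm (F (x + h *\<^sub>R axis a 1 + h *\<^sub>R axis b 1) - F (x + h *\<^sub>R axis a 1)
               - F (x + h *\<^sub>R axis b 1) + F x - (h*h) *\<^sub>R D (axis b 1)) \<le> 3*e*(h*h)"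
proof -
  define Fa where "Fa = pder [a] F"
  define C where "C = h *\<^sub>R D (axis b 1)"
  define p1 where "p1 s = x + s *\<^sub>R axis a 1 + h *\<^sub>R axis b 1" for s
  define p0 where "p0 s = x + s *\<^sub>R axis a 1" for s
  define G where "G s = F (p1 s) - F (p0 s) - s *\<^sub>R C" for s
  have np1: "norm (p1 s - x) \<le> 2*h" and np0: "norm (p0 s - x) \<le> h" if "s \<in> {0..h}" for s
    using that norm_triangle_ineq[of "s *\<^sub>R axis a 1" "h *\<^sub>R axis b (1::real)"]
    unfolding p1_def p0_def by auto
  have in_ball: "p1 s \<in> ball x r" "p0 s \<in> ball x r" if "s \<in> {0..h}" for s
    using np1[OF that] np0[OF that] h by (auto simp: dist_norm norm_minus_commute)
  have dG: "(G has_derivative (\<lambda>t. t *\<^sub>R (Fa (p1 s) - Fa (p0 s) - C))) (at s within {0..h})"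
    if s: "s \<in> {0..h}" for s
  proof -
    have "((\<lambda>s. F (p1 s)) has_derivative (\<lambda>t. t *\<^sub>R Fa (p1 s))) (at s within {0..h})"
      using has_derivative_along_axis[of F "x + h *\<^sub>R axis b 1" s a] dF in_ball[OF s]
      unfolding p1_def Fa_def by (simp add: algebra_simps)
    moreover have "((\<lambda>s. F (p0 s)) has_derivative (\<lambda>t. t *\<^sub>R Fa (p0 s))) (at s within {0..h})"
      using has_derivative_along_axis[of F x s a] dF in_ball[OF s] unfolding p0_def Fa_def by simp
    ultimately have "(G has_derivative (\<lambda>t. t *\<^sub>R Fa (p1 s) - t *\<^sub>R Fa (p0 s) - t *\<^sub>R C)) (at s within {0..h})"
      unfolding G_def by (intro has_derivative_diff) (auto intro!: derivative_eq_intros)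
    then show ?thesis by (simp add: algebra_simps)
  qed
  have bound: "onorm (\<lambda>t. t *\<^sub>R (Fa (p1 s) - Fa (p0 s) - C)) \<le> 3*e*h" if s: "s \<in> {0..h}" for s
  proof -
    have "C = D (p1 s - p0 s)"
      unfolding C_def p1_def p0_def using linear_scale[OF lin] by simp
    then have "onorm (\<lambda>t. t *\<^sub>R (Fa (p1 s) - Fa (p0 s) - C)) = norm (Fa (p1 s) - Fa (p0 s) - D (p1 s - p0 s))"
      using onorm_scaleR_left[OF bounded_linear_ident] onorm_id[where 'a=real] by simp
    also have "\<dots> \<le> e * norm (p1 s - x) + e * norm (p0 s - x)"
      using linear_approx_increment[OF lin approx] np1[OF s] np0[OF s] h unfolding Fa_def by auto
    also have "\<dots> \<le> e * (2*h) + e * h"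
      using np1[OF s] np0[OF s] e by (intro add_mono mult_left_mono) auto
    finally show ?thesis by simp
  qed
  have "norm (G h - G 0) \<le> 3*e*h * norm (h - 0)"
    by (rule differentiable_bound[of "{0..h}" G _ "3*e*h"]) (use dG bound h in auto)
  moreover have "G h - G 0 = F (x + h *\<^sub>R axis a 1 + h *\<^sub>R axis b 1) - F (x + h *\<^sub>R axis a 1)
                             - F (x + h *\<^sub>R axis b 1) + F x - (h*h) *\<^sub>R D (axis b 1)"
    unfolding G_def p1_def p0_def C_def by (simp add: algebra_simps)
  ultimately show ?thesis using h by (simp add: mult.assoc)
qed

lemma second_difference_estimate:
  fixes F :: "real^'m::finite \<Rightarrow> 'b::real_normed_vector"
  assumes U: "open U" "x \<in> U" and dF: "\<forall>y\<in>U. F differentiable at y"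
    and dA: "pder [a] F differentiable at x" and e: "e > 0"
  shows "\<exists>d>0. \<forall>h. 0 < h \<longrightarrow> h < d \<longrightarrow>
     norm (F (x + h *\<^sub>R axis a 1 + h *\<^sub>R axis b 1) - F (x + h *\<^sub>R axis a 1) - F (x + h *\<^sub>R axis b 1) + F x
           - (h*h) *\<^sub>R pder [b,a] F x) \<le> 3*e*(h*h)"
proof -
  define D where "D = frechet_derivative (pder [a] F) (at x)"
  have hA: "(pder [a] F has_derivative D) (at x)" using has_frechet_derivative dA unfolding D_def by blast
  then obtain d1 where d1: "d1 > 0"
    "\<forall>y. norm (y - x) < d1 \<longrightarrow> norm (pder [a] F y - pder [a] F x - D (y - x)) \<le> e * norm (y - x)"
    using e unfolding has_derivative_at_alt by blast
  obtain d2 where d2: "d2 > 0" "ball x d2 \<subseteq> U" using U open_contains_ball by blast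
  define r where "r = min d1 d2"
  have dF': "\<forall>y\<in>ball x r. F differentiable at y" using dF d2 unfolding r_def by auto
  have approx: "\<forall>y. norm (y - x) < r \<longrightarrow> norm (pder [a] F y - pder [a] F x - D (y - x)) \<le> e * norm (y - x)"
    using d1 unfolding r_def by auto
  have "norm (F (x + h *\<^sub>R axis a 1 + h *\<^sub>R axis b 1) - F (x + h *\<^sub>R axis a 1)
      - F (x + h *\<^sub>R axis b 1) + F x - (h*h) *\<^sub>R pder [b,a] F x) \<le> 3*e*(h*h)" if "0 < h" "h < r / 2" for h
  proof -
    have "D (axis b 1) = pder [b,a] F x" unfolding D_def by (simp add: pder.simps(2))
    moreover have "norm (F (x + h *\<^sub>R axis a 1 + h *\<^sub>R axis b 1) - F (x + h *\<^sub>R axis a 1)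
      - F (x + h *\<^sub>R axis b 1) + F x - (h*h) *\<^sub>R D (axis b 1)) \<le> 3*e*(h*h)"
      by (rule second_difference_bound[OF dF' has_derivative_linear[OF hA] approx]) (use e that in auto)
    ultimately show ?thesis by simp
  qed
  moreover have "r / 2 > 0" using d1 d2 unfolding r_def by simp
  ultimately show ?thesis by blast
qed

lemma pder_swap_differentiable:
  fixes F :: "real^'m::finite \<Rightarrow> 'b::real_normed_vector"
  assumes U: "open U" "x \<in> U" and dF: "\<forall>y\<in>U. F differentiable at y"
    and dA: "pder [a] F differentiable at x" and dB: "pder [b] F differentiable at x"
  shows "pder [a,b] F x = pder [b,a] F x"
proof -
  have six_e: "norm (pder [a,b] F x - pder [b,a] F x) \<le> 6*e" if e: "e > 0" for e
  proof -
    define D where "D h = F (x + h *\<^sub>R axis a 1 + h *\<^sub>R axis b 1) - F (x + h *\<^sub>R axis a 1)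
                           - F (x + h *\<^sub>R axis b 1) + F x" for h
    have D_swap: "D h = F (x + h *\<^sub>R axis b 1 + h *\<^sub>R axis a 1) - F (x + h *\<^sub>R axis b 1)
                         - F (x + h *\<^sub>R axis a 1) + F x" for h
      unfolding D_def by (simp add: algebra_simps)
    obtain d where d: "d > 0" "\<forall>h. 0 < h \<longrightarrow> h < d \<longrightarrow> norm (D h - (h*h) *\<^sub>R pder [b,a] F x) \<le> 3*e*(h*h)"
      using second_difference_estimate[OF U dF dA e] unfolding D_def by blast
    obtain d' where d': "d' > 0" "\<forall>h. 0 < h \<longrightarrow> h < d' \<longrightarrow> norm (D h - (h*h) *\<^sub>R pder [a,b] F x) \<le> 3*e*(h*h)"
      using second_difference_estimate[OF U dF dB e] unfolding D_swap by blast
    define h where "h = min d d' / 2"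
    have h: "0 < h" "h < d" "h < d'" using d d' unfolding h_def by auto
    have "(h*h) *\<^sub>R (pder [a,b] F x - pder [b,a] F x)
          = (D h - (h*h) *\<^sub>R pder [b,a] F x) - (D h - (h*h) *\<^sub>R pder [a,b] F x)"
      by (simp add: algebra_simps)
    then have "norm ((h*h) *\<^sub>R (pder [a,b] F x - pder [b,a] F x))
               \<le> norm (D h - (h*h) *\<^sub>R pder [b,a] F x) + norm (D h - (h*h) *\<^sub>R pder [a,b] F x)"
      by (simp only: norm_triangle_ineq4)
    also have "\<dots> \<le> 3*e*(h*h) + 3*e*(h*h)"
      using d(2) d'(2) h by (intro add_mono) auto
    finally have "(h*h) * norm (pder [a,b] F x - pder [b,a] F x) \<le> 3*e*(h*h) + 3*e*(h*h)"
      by (simp only: norm_scaleR abs_mult abs_mult_self_eq)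
    then have "(h*h) * norm (pder [a,b] F x - pder [b,a] F x) \<le> (h*h) * (6*e)"
      by (simp add: algebra_simps)
    then show ?thesis using h(1) by (simp add: mult_le_cancel_left_pos)
  qed
  have "norm (pder [a,b] F x - pder [b,a] F x) \<le> 0"
  proof (rule field_le_epsilon)
    fix e :: real assume "0 < e"
    then show "norm (pder [a,b] F x - pder [b,a] F x) \<le> 0 + e" using six_e[of "e/6"] by simp
  qed
  then show ?thesis by simp
qed

lemma pder_swap:
  assumes "open U" "x \<in> U" "smooth_on U F"
  shows "pder [a,b] F x = pder [b,a] F x"
  using pder_swap_differentiable[OF assms(1,2)] smooth_on_differentiable[OF assms(3)]
    smooth_on_differentiable[OF smooth_on_pder[OF assms(3)] assms(2)]
  by blast

lemma matrix_add_rdistrib: "((A::real^'n^'m) + B) ** (C::real^'p^'n) = A ** C + B ** C"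
  by (simp add: matrix_matrix_mult_def vec_eq_iff sum.distrib algebra_simps)

lemma matrix_diff_rdistrib: "((A::real^'n^'m) - B) ** (C::real^'p^'n) = A ** C - B ** C"
  by (simp add: matrix_matrix_mult_def vec_eq_iff sum_subtractf algebra_simps)

lemma matrix_diff_ldistrib: "(A::real^'n^'m) ** ((B::real^'p^'n) - C) = A ** B - A ** C"
  by (simp add: matrix_matrix_mult_def vec_eq_iff sum_subtractf algebra_simps)

lemma matrix_mult_uminus_left: "(- (A::real^'n^'m)) ** (C::real^'p^'n) = - (A ** C)"
  by (simp add: matrix_matrix_mult_def vec_eq_iff sum_negf)

lemma matrix_mult_uminus_right: "(A::real^'n^'m) ** (- (C::real^'p^'n)) = - (A ** C)"
  by (simp add: matrix_matrix_mult_def vec_eq_iff sum_negf)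

lemma matrix_mult_scaleR_left: "(c *\<^sub>R (A::real^'n^'m)) ** (C::real^'p^'n) = c *\<^sub>R (A ** C)"
  by (simp add: matrix_matrix_mult_def vec_eq_iff sum_distrib_left algebra_simps)

lemma matrix_mult_scaleR_right: "(A::real^'n^'m) ** (c *\<^sub>R (C::real^'p^'n)) = c *\<^sub>R (A ** C)"
  by (simp add: matrix_matrix_mult_def vec_eq_iff sum_distrib_left algebra_simps)

lemma matrix_mult_sum_left: "(\<Sum>i\<in>S. (A i::real^'n^'m)) ** (C::real^'p^'n) = (\<Sum>i\<in>S. A i ** C)"
  by (induction S rule: infinite_finite_induct) (auto simp: matrix_add_rdistrib times0_left)

lemma matrix_mult_sum_right: "(C::real^'n^'m) ** (\<Sum>i\<in>S. (A i::real^'p^'n)) = (\<Sum>i\<in>S. C ** A i)"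
  by (induction S rule: infinite_finite_induct) (auto simp: matrix_add_ldistrib times0_right)

lemmas matrix_mult_simps = matrix_add_rdistrib matrix_add_ldistrib matrix_diff_rdistrib
  matrix_diff_ldistrib matrix_mult_uminus_left matrix_mult_uminus_right matrix_mult_scaleR_left
  matrix_mult_scaleR_right times0_right times0_left matrix_mul_assoc[symmetric]
  matrix_mult_sum_left matrix_mult_sum_right

lemma transpose_nth: "transpose A $ i $ j = A $ j $ i"
  by (simp add: transpose_def)

lemma transpose_add: "transpose ((A::real^'n::finite^'m::finite) + B) = transpose A + transpose B"
  by (simp add: transpose_def vec_eq_iff)

lemma transpose_diff: "transpose ((A::real^'n::finite^'m::finite) - B) = transpose A - transpose B"
  by (simp add: transpose_def vec_eq_iff)

lemma transpose_0: "transpose (0::real^'n::finite^'m::finite) = 0"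
  by (simp add: transpose_def vec_eq_iff)

lemma transpose_sum: "transpose (\<Sum>c\<in>S. (A c :: real^'n::finite^'m::finite)) = (\<Sum>c\<in>S. transpose (A c))"
  by (induction S rule: infinite_finite_induct) (auto simp: transpose_add transpose_0)

text \<open>\<open>algebra_simps\<close> rewrites \<open>M + M\<close> to the componentwise product \<open>2 * M\<close>.\<close>

lemma two_times_matrix: "(2::real^'n::finite^'m::finite) * M = (2::real) *\<^sub>R M"
  by (simp add: vec_eq_iff)

lemma matrix_scaleR_vector_mult: "(c *\<^sub>R (A::real^'n::finite^'m)) *v x = c *\<^sub>R (A *v x)"
  by (simp add: matrix_vector_mult_def vec_eq_iff sum_distrib_left algebra_simps)

lemma sum_matrix_vector_mult: "(\<Sum>c\<in>S. (A c :: real^'n::finite^'m::finite)) *v v = (\<Sum>c\<in>S. A c *v v)"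
  by (induction S rule: infinite_finite_induct) (auto simp: matrix_vector_mult_add_rdistrib)

lemma matrix_vector_mult_sum_scaleR:
  "(\<Sum>l\<in>S. c l *\<^sub>R ((A::real^'n::finite^'m::finite) *v w l)) = A *v (\<Sum>l\<in>S. c l *\<^sub>R w l)"
  by (induction S rule: infinite_finite_induct) (auto simp: matrix_vector_right_distrib matrix_vector_mult_scaleR)

lemma sum_axis_scaleR:
  fixes F :: "'m::finite \<Rightarrow> 'b::real_vector"
  shows "(\<Sum>b\<in>UNIV. axis a (1::real) $ b *\<^sub>R F b) = F a"
proof -
  have "(\<Sum>b\<in>UNIV. axis a (1::real) $ b *\<^sub>R F b) = (\<Sum>b\<in>UNIV. if b = a then F b else 0)"
    by (rule sum.cong) (auto simp: axis_def)
  then show ?thesis by simp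
qed

lemma sum_column_axis: "(\<Sum>l\<in>UNIV. (A::real^'n::finite^'m::finite) $ l $ b *\<^sub>R axis l 1) = A *v axis b 1"
proof -
  have "(\<Sum>l\<in>UNIV. A $ l $ b *\<^sub>R axis l 1) $ i = (A *v axis b 1) $ i" for i
  proof -
    have "(\<Sum>l\<in>UNIV. A $ l $ b *\<^sub>R axis l (1::real)) $ i = (\<Sum>l\<in>UNIV. if l = i then A $ l $ b else 0)"
      unfolding sum_component by (rule sum.cong) (auto simp: axis_def)
    then show ?thesis by (simp add: matrix_vector_mult_basis column_def)
  qed
  then show ?thesis by (simp add: vec_eq_iff)
qed

lemma matrix_mult_entry_axis:
  "((M::real^'n::finite^'m::finite) ** (N::real^'p::finite^'n)) $ d $ c = (M *v (N *v axis c 1)) $ d"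
  by (simp add: matrix_matrix_mult_def matrix_vector_mult_def axis_def if_distrib cong: if_cong)

lemma matrix_eq_0_if_columns: "(\<And>j. (A::real^'n::finite^'m::finite) *v axis j 1 = 0) \<Longrightarrow> A = 0"
  by (simp add: vec_eq_iff matrix_vector_mult_basis column_def)

lemma inner_matrix_vector_mult_transpose:
  "(u::real^'m::finite) \<bullet> ((A::real^'n::finite^'m) *v v) = (transpose A *v u) \<bullet> v"
  by (metis dot_lmul_matrix transpose_matrix_vector inner_commute)

lemma invertible_matrix_vector_mult_eq_0: "invertible (A::real^'n::finite^'n) \<Longrightarrow> A *v v = 0 \<Longrightarrow> v = 0"
  by (metis invertible_def matrix_vector_mul_assoc matrix_vector_mul_lid matrix_vector_mult_0_right)

lemma matrix_inv_mult:
  "invertible (A::real^'n::finite^'n) \<Longrightarrow> A ** matrix_inv A = mat 1 \<and> matrix_inv A ** A = mat 1"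
  unfolding invertible_def matrix_inv_def by (rule someI_ex)

lemma matrix_inv_entry_cramer:
  fixes A :: "real^'n::finite^'n"
  assumes "invertible A"
  shows "det (\<chi> i l. if l = k then axis j 1 $ i else A$i$l) / det A = matrix_inv A $ k $ j"
proof -
  have d: "det A \<noteq> 0" using assms invertible_det_nz by blast
  have "A *v (matrix_inv A *v axis j 1) = axis j 1"
    using matrix_inv_mult[OF assms] by (simp add: matrix_vector_mul_assoc)
  then have "matrix_inv A *v axis j 1 = (\<chi> k. det(\<chi> i l. if l=k then axis j 1 $i else A$i$l) / det A)"
    using cramer[OF d] by blast
  moreover have "(matrix_inv A *v axis j 1) $ k = matrix_inv A $ k $ j"
    by (simp add: matrix_vector_mult_def axis_def if_distrib cong: if_cong)
  ultimately show ?thesis by simp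
qed

definition outer :: "real^'n::finite \<Rightarrow> real^'m::finite \<Rightarrow> real^'m^'n" where
  "outer u v = (\<chi> i j. u $ i * v $ j)"

lemma outer_nth: "outer u v $ i $ j = u $ i * v $ j" by (simp add: outer_def)
lemma outer_add_left: "outer (u + w) v = outer u v + outer w v" by (simp add: outer_def vec_eq_iff algebra_simps)
lemma outer_add_right: "outer u (v + w) = outer u v + outer u w" by (simp add: outer_def vec_eq_iff algebra_simps)
lemma outer_diff_left: "outer (u - w) v = outer u v - outer w v" by (simp add: outer_def vec_eq_iff algebra_simps)
lemma outer_diff_right: "outer u (v - w) = outer u v - outer u w" by (simp add: outer_def vec_eq_iff algebra_simps)
lemma outer_uminus_left: "outer (- u) v = - outer u v" by (simp add: outer_def vec_eq_iff)
lemma outer_uminus_right: "outer u (- v) = - outer u v" by (simp add: outer_def vec_eq_iff)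
lemma outer_scaleR_left: "outer (c *\<^sub>R u) v = c *\<^sub>R outer u v" by (simp add: outer_def vec_eq_iff)
lemma outer_scaleR_right: "outer u (c *\<^sub>R v) = c *\<^sub>R outer u v" by (simp add: outer_def vec_eq_iff algebra_simps)
lemma outer_0_left: "outer 0 v = 0" by (simp add: outer_def vec_eq_iff)
lemma outer_0_right: "outer u 0 = 0" by (simp add: outer_def vec_eq_iff)
lemma outer_times_matrix: "outer u v ** (A::real^'p::finite^'m::finite) = outer u (transpose A *v v)"
  by (simp add: outer_def matrix_matrix_mult_def matrix_vector_mult_def transpose_def vec_eq_iff sum_distrib_left algebra_simps)
lemma matrix_times_outer: "(A::real^'n::finite^'p::finite) ** outer u v = outer (A *v u) v"
  by (simp add: outer_def matrix_matrix_mult_def matrix_vector_mult_def vec_eq_iff sum_distrib_left sum_distrib_right algebra_simps)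
lemma sum_outer_right: "(\<Sum>l\<in>S. c l *\<^sub>R outer u (w l)) = outer u (\<Sum>l\<in>S. c l *\<^sub>R w l)"
  by (induction S rule: infinite_finite_induct) (auto simp: outer_0_right outer_add_right outer_scaleR_right)
lemma sum_outer_left: "(\<Sum>l\<in>S. c l *\<^sub>R outer (w l) v) = outer (\<Sum>l\<in>S. c l *\<^sub>R w l) v"
  by (induction S rule: infinite_finite_induct) (auto simp: outer_0_left outer_add_left outer_scaleR_left)
lemmas outer_simps = outer_add_left outer_add_right outer_diff_left outer_diff_right outer_uminus_left outer_uminus_right
  outer_scaleR_left outer_scaleR_right outer_0_left outer_0_right outer_times_matrix matrix_times_outer

lemma bounded_bilinear_outer: "bounded_bilinear (outer :: real^'n::finite \<Rightarrow> real^'m::finite \<Rightarrow> real^'m^'n)"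
  unfolding bilinear_conv_bounded_bilinear[symmetric] bilinear_def
  by (auto simp: linear_iff outer_simps)

lemma outer_matrix_vector_mult: "outer u w *v v = (w \<bullet> v) *\<^sub>R u"
  by (simp add: outer_def matrix_vector_mult_def vec_eq_iff inner_vec_def sum_distrib_left algebra_simps)

lemma bounded_bilinear_matrix_mult: "bounded_bilinear ((**) :: real^'n::finite^'m::finite \<Rightarrow> real^'p::finite^'n \<Rightarrow> real^'p^'m)"
  unfolding bilinear_conv_bounded_bilinear[symmetric] bilinear_def
  by (auto simp: linear_iff matrix_add_rdistrib matrix_add_ldistrib matrix_mult_scaleR_left matrix_mult_scaleR_right)

lemma bounded_bilinear_matrix_vector_mult: "bounded_bilinear ((*v) :: real^'n::finite^'m::finite \<Rightarrow> real^'n \<Rightarrow> real^'m)"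
  unfolding bilinear_conv_bounded_bilinear[symmetric] bilinear_def
  by (auto simp: linear_iff algebra_simps matrix_vector_mult_add_rdistrib matrix_scaleR_vector_mult)

lemma bounded_linear_transpose: "bounded_linear (transpose :: real^'n::finite^'m::finite \<Rightarrow> real^'m^'n)"
proof -
  have "linear (transpose :: real^'n::finite^'m::finite \<Rightarrow> real^'m^'n)"
    by (auto simp: linear_iff transpose_def vec_eq_iff)
  then show ?thesis by (simp add: linear_conv_bounded_linear)
qed

lemma smooth_on_matrix_mult:
  fixes A :: "real^'k::finite \<Rightarrow> real^'n::finite^'m::finite" and B :: "real^'k \<Rightarrow> real^'p::finite^'n"
  shows "open U \<Longrightarrow> smooth_on U A \<Longrightarrow> smooth_on U B \<Longrightarrow> smooth_on U (\<lambda>y. A y ** B y)"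
  by (rule smooth_on_bilinear[OF _ bounded_bilinear_matrix_mult])

lemma smooth_on_matrix_vector_mult:
  fixes A :: "real^'k::finite \<Rightarrow> real^'n::finite^'m::finite" and v :: "real^'k \<Rightarrow> real^'n"
  shows "open U \<Longrightarrow> smooth_on U A \<Longrightarrow> smooth_on U v \<Longrightarrow> smooth_on U (\<lambda>y. A y *v v y)"
  by (rule smooth_on_bilinear[OF _ bounded_bilinear_matrix_vector_mult])

lemma smooth_on_transpose:
  fixes A :: "real^'k::finite \<Rightarrow> real^'n::finite^'m::finite"
  shows "open U \<Longrightarrow> smooth_on U A \<Longrightarrow> smooth_on U (\<lambda>y. transpose (A y))"
  by (rule smooth_on_linear[OF _ bounded_linear_transpose])

lemma pder_matrix_mult:
  fixes A :: "real^'k::finite \<Rightarrow> real^'n::finite^'m::finite" and B :: "real^'k \<Rightarrow> real^'p::finite^'n"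
  shows "A differentiable at x \<Longrightarrow> B differentiable at x \<Longrightarrow>
  pder [k] (\<lambda>y. A y ** B y) x = pder [k] A x ** B x + A x ** pder [k] B x"
  by (rule pder_bilinear[OF bounded_bilinear_matrix_mult])

lemma pder_matrix_vector_mult:
  fixes A :: "real^'k::finite \<Rightarrow> real^'n::finite^'m::finite" and v :: "real^'k \<Rightarrow> real^'n"
  shows "A differentiable at x \<Longrightarrow> v differentiable at x \<Longrightarrow>
  pder [k] (\<lambda>y. A y *v v y) x = pder [k] A x *v v x + A x *v pder [k] v x"
  by (rule pder_bilinear[OF bounded_bilinear_matrix_vector_mult])

lemma pder_transpose:
  fixes A :: "real^'k::finite \<Rightarrow> real^'n::finite^'m::finite"
  shows "A differentiable at x \<Longrightarrow> pder [k] (\<lambda>y. transpose (A y)) x = transpose (pder [k] A x)"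
  by (rule pder_linear[OF bounded_linear_transpose])

lemma smooth_on_det:
  assumes "open U" "\<And>i j. smooth_on U (\<lambda>y. (A y :: real^'n::finite^'n) $ i $ j)"
  shows "smooth_on U (\<lambda>y. det (A y))"
  unfolding det_def
  by (intro smooth_on_sum[OF assms(1)] smooth_on_mult[OF assms(1)] smooth_on_const smooth_on_prod[OF assms(1)] assms(2)) auto

lemma smooth_on_matrix_inv:
  fixes A :: "real^'m::finite \<Rightarrow> real^'n::finite^'n"
  assumes U: "open U" and A: "smooth_on U A" and inv: "\<forall>y\<in>U. invertible (A y)"
  shows "smooth_on U (\<lambda>y. matrix_inv (A y))"
proof (rule smooth_on_matrix[OF U])
  fix k j
  have entries: "\<And>i l. smooth_on U (\<lambda>y. (A y) $ i $ l)" using smooth_on_entry[OF U A] .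
  have numerator: "smooth_on U (\<lambda>y. det (\<chi> i l. if l = k then axis j 1 $ i else A y $i$l))"
  proof (rule smooth_on_det[OF U])
    fix i l
    show "smooth_on U (\<lambda>y. (\<chi> i l. if l = k then axis j 1 $ i else A y $i$l) $ i $ l)"
      by (cases "l = k") (auto simp: entries smooth_on_const)
  qed
  have inverse_det: "smooth_on U (\<lambda>y. inverse (det (A y)))"
    by (rule smooth_on_inverse[OF U]) (use inv invertible_det_nz smooth_on_det[OF U entries] in auto)
  have "smooth_on U (\<lambda>y. det (\<chi> i l. if l = k then axis j 1 $ i else A y $i$l) * inverse (det (A y)))"
    using smooth_on_mult[OF U numerator inverse_det] .
  then show "smooth_on U (\<lambda>y. matrix_inv (A y) $ k $ j)"
    by (rule smooth_on_cong[OF U, rotated]) (use inv matrix_inv_entry_cramer in \<open>auto simp: divide_inverse\<close>)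
qed


section \<open>The Levi-Civita connection and its curvature in a chart\<close>

text \<open>
  \<open>\<Gamma> a\<close> is the matrix of \<open>\<nabla>\<^bsub>\<partial>\<^sub>a\<^esub>\<close> acting on components, \<open>(\<Gamma> a) $ k $ j = \<Gamma>\<^sup>k\<^sub>a\<^sub>j\<close>, and
  \<open>christoffel1 a j l\<close> is the Christoffel symbol of the first kind \<open>\<Gamma>\<^sub>a\<^sub>j\<^sub>l\<close>.
  \<open>Riem a b\<close> is the matrix of the curvature endomorphism \<open>R(\<partial>\<^sub>a, \<partial>\<^sub>b)\<close>.
\<close>

locale riemannian_chart =
  fixes U :: "(real^'m::finite) set" and g :: "real^'m \<Rightarrow> real^'m^'m"
  assumes U: "open U" and riemannian: "riemannian_metric_on U g"
begin

definition ginv :: "real^'m \<Rightarrow> real^'m^'m" where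
  "ginv y = matrix_inv (g y)"

definition christoffel1 :: "'m \<Rightarrow> 'm \<Rightarrow> 'm \<Rightarrow> real^'m \<Rightarrow> real" where
  "christoffel1 a j l y = (1/2) * (pder [a] g y $ j $ l + pder [j] g y $ a $ l - pder [l] g y $ a $ j)"

definition \<Gamma> :: "'m \<Rightarrow> real^'m \<Rightarrow> real^'m^'m" where
  "\<Gamma> a y = (\<chi> k j. christoffel g y k a j)"

definition cov :: "'m \<Rightarrow> (real^'m \<Rightarrow> real^'m) \<Rightarrow> real^'m \<Rightarrow> real^'m" where
  "cov a Y y = pder [a] Y y + \<Gamma> a y *v Y y"

definition Riem :: "'m \<Rightarrow> 'm \<Rightarrow> real^'m \<Rightarrow> real^'m^'m" where
  "Riem a b y = pder [a] (\<Gamma> b) y - pder [b] (\<Gamma> a) y + \<Gamma> a y ** \<Gamma> b y - \<Gamma> b y ** \<Gamma> a y"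

lemma g_smooth: "smooth_on U g"
  using riemannian unfolding riemannian_metric_on_def by blast

lemma g_differentiable: "y \<in> U \<Longrightarrow> g differentiable at y"
  using smooth_on_differentiable g_smooth by blast

lemma g_transpose: "y \<in> U \<Longrightarrow> transpose (g y) = g y"
  using riemannian unfolding riemannian_metric_on_def by blast

lemma g_sym: "y \<in> U \<Longrightarrow> g y $ i $ j = g y $ j $ i"
  using g_transpose by (metis transpose_nth)

lemma g_invertible: "y \<in> U \<Longrightarrow> invertible (g y)"
proof -
  assume y: "y \<in> U"
  have "v \<bullet> (g y *v v) > 0" if "v \<noteq> 0" for v
    using riemannian y that unfolding riemannian_metric_on_def gmet_def by blast
  then have "\<forall>v. g y *v v = 0 \<longrightarrow> v = 0"
    by (metis inner_zero_right less_irrefl)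
  then show ?thesis using matrix_left_invertible_ker invertible_left_inverse by blast
qed

lemma g_ginv: "y \<in> U \<Longrightarrow> g y ** ginv y = mat 1"
  using matrix_inv_mult[OF g_invertible] unfolding ginv_def by blast

lemma ginv_g: "y \<in> U \<Longrightarrow> ginv y ** g y = mat 1"
  using matrix_inv_mult[OF g_invertible] unfolding ginv_def by blast

lemma ginv_smooth: "smooth_on U ginv"
  unfolding ginv_def by (rule smooth_on_matrix_inv[OF U g_smooth]) (use g_invertible in blast)

lemma pder_g_sym: "y \<in> U \<Longrightarrow> pder [k] g y $ i $ j = pder [k] g y $ j $ i"
  using pder_eq_on_open[OF U, of "\<lambda>y. g y $ i $ j" "\<lambda>y. g y $ j $ i" y "[k]"] g_sym
  by (simp add: pder_entry[OF g_differentiable])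

lemma Gamma_eq: "y \<in> U \<Longrightarrow> \<Gamma> a y = ginv y ** (\<chi> l j. christoffel1 a j l y)"
  unfolding \<Gamma>_def christoffel_def christoffel1_def ginv_def
  by (simp add: vec_eq_iff matrix_matrix_mult_def pder_entry[OF g_differentiable]
      sum_distrib_left algebra_simps)

lemma Gamma_sym: "y \<in> U \<Longrightarrow> \<Gamma> a y $ k $ b = \<Gamma> b y $ k $ a"
  by (simp add: Gamma_eq matrix_matrix_mult_def christoffel1_def pder_g_sym algebra_simps)

lemma Gamma_sym_axis: "y \<in> U \<Longrightarrow> \<Gamma> a y *v axis b 1 = \<Gamma> b y *v axis a 1"
  by (simp add: matrix_vector_mult_basis column_def vec_eq_iff Gamma_sym)

lemma metric_compatible: "y \<in> U \<Longrightarrow> pder [a] g y = g y ** \<Gamma> a y + transpose (\<Gamma> a y) ** g y"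
proof -
  assume y: "y \<in> U"
  have g_Gamma: "g y ** \<Gamma> a y = (\<chi> l j. christoffel1 a j l y)"
    by (simp add: Gamma_eq[OF y] matrix_mul_assoc g_ginv[OF y])
  have "transpose (\<Gamma> a y) ** g y = transpose (g y ** \<Gamma> a y)"
    by (simp add: matrix_transpose_mul g_transpose[OF y])
  then show ?thesis
    by (simp add: g_Gamma vec_eq_iff transpose_def christoffel1_def pder_g_sym[OF y] field_simps)
qed

lemma christoffel1_smooth: "smooth_on U (christoffel1 a j l)"
proof -
  have "smooth_on U (\<lambda>y. pder [k] g y $ i $ j)" for k i j
    by (intro smooth_on_entry[OF U] smooth_on_pder g_smooth)
  then show ?thesis unfolding christoffel1_def[abs_def]
    by (intro smooth_on_mult[OF U] smooth_on_const smooth_on_add[OF U] smooth_on_diff[OF U])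
qed

lemma Gamma_smooth: "smooth_on U (\<Gamma> a)"
proof -
  have "smooth_on U (\<lambda>y. (\<chi> l j. christoffel1 a j l y) :: real^'m^'m)"
    by (intro smooth_on_matrix[OF U]) (simp add: christoffel1_smooth)
  then have "smooth_on U (\<lambda>y. ginv y ** (\<chi> l j. christoffel1 a j l y))"
    by (intro smooth_on_matrix_mult[OF U ginv_smooth])
  then show ?thesis by (rule smooth_on_cong[OF U, rotated]) (simp add: Gamma_eq)
qed

lemma Gamma_differentiable: "y \<in> U \<Longrightarrow> \<Gamma> a differentiable at y"
  using smooth_on_differentiable Gamma_smooth by blast

lemma pder_Gamma_differentiable: "y \<in> U \<Longrightarrow> pder [c] (\<Gamma> a) differentiable at y"
  using smooth_on_differentiable[OF smooth_on_pder[OF Gamma_smooth]] by blast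

lemma cov_smooth: "smooth_on U Y \<Longrightarrow> smooth_on U (cov a Y)"
  unfolding cov_def[abs_def]
  by (intro smooth_on_add[OF U] smooth_on_pder smooth_on_matrix_vector_mult[OF U] Gamma_smooth)

lemma Riem_smooth: "smooth_on U (Riem a b)"
  unfolding Riem_def[abs_def]
  by (intro smooth_on_add[OF U] smooth_on_diff[OF U] smooth_on_pder smooth_on_matrix_mult[OF U] Gamma_smooth)

lemma Riem_differentiable: "y \<in> U \<Longrightarrow> Riem a b differentiable at y"
  using smooth_on_differentiable[OF Riem_smooth] .

lemma Riem_swap: "Riem b a y = - Riem a b y"
  unfolding Riem_def by (simp add: algebra_simps)

lemma nabla_eq_sum_cov:
  assumes "Y differentiable at x"
  shows "nabla g X Y x = (\<Sum>a\<in>UNIV. X x $ a *\<^sub>R cov a Y x)"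
proof -
  have "(\<chi> k. \<Sum>i\<in>UNIV. \<Sum>j\<in>UNIV. christoffel g x k i j * X x $ i * Y x $ j)
        = (\<Sum>a\<in>UNIV. X x $ a *\<^sub>R (\<Gamma> a x *v Y x))"
    by (simp add: vec_eq_iff sum_component matrix_vector_mult_def \<Gamma>_def sum_distrib_left algebra_simps)
  then show ?thesis
    unfolding nabla_def dirD_eq_sum_pder[OF assms] cov_def by (simp add: scaleR_add_right sum.distrib)
qed

lemma nabla_coord: "Y differentiable at x \<Longrightarrow> nabla g (coord a) Y x = cov a Y x"
  by (simp add: nabla_eq_sum_cov coord_def sum_axis_scaleR)

lemma coord_smooth: "smooth_on U (coord a)"
  unfolding coord_def using smooth_on_const by blast

lemma lie_coord: "lie (coord a) (coord b) = (\<lambda>x. 0)"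
  unfolding lie_def dirD_def coord_def by simp

lemma nabla_0_left: "Z differentiable at x \<Longrightarrow> nabla g (\<lambda>x. 0) Z x = 0"
  unfolding nabla_def dirD_def by (simp add: vec_eq_iff linear_0[OF linear_frechet_derivative])

lemma cov_eq_on_open: "\<forall>y\<in>U. F y = H y \<Longrightarrow> x \<in> U \<Longrightarrow> cov a F x = cov a H x"
  unfolding cov_def using pder_eq_on_open[OF U] by simp

lemma cov_cov:
  assumes Z: "smooth_on U Z" and x: "x \<in> U"
  shows "cov a (cov b Z) x = pder [a,b] Z x + pder [a] (\<Gamma> b) x *v Z x + \<Gamma> b x *v pder [a] Z x
     + \<Gamma> a x *v pder [b] Z x + \<Gamma> a x *v (\<Gamma> b x *v Z x)"
proof -
  have dZ: "Z differentiable at x" using smooth_on_differentiable[OF Z x] .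
  have dZb: "pder [b] Z differentiable at x" using smooth_on_differentiable[OF smooth_on_pder[OF Z] x] .
  have dGZ: "(\<lambda>y. \<Gamma> b y *v Z y) differentiable at x"
    using differentiable_bounded_bilinear[OF bounded_bilinear_matrix_vector_mult Gamma_differentiable[OF x] dZ] .
  have "pder [a] (cov b Z) x = pder [a] (pder [b] Z) x + pder [a] (\<lambda>y. \<Gamma> b y *v Z y) x"
    unfolding cov_def[abs_def] by (rule pder_add[OF dZb dGZ])
  also have "\<dots> = pder [a,b] Z x + (pder [a] (\<Gamma> b) x *v Z x + \<Gamma> b x *v pder [a] Z x)"
    by (simp add: pder_pder pder_matrix_vector_mult[OF Gamma_differentiable[OF x] dZ])
  finally show ?thesis
    unfolding cov_def[of a "cov b Z"] by (simp add: cov_def matrix_vector_right_distrib algebra_simps)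
qed

lemma nabla_coord_nabla_coord:
  assumes Z: "smooth_on U Z" and x: "x \<in> U"
  shows "nabla g (coord a) (nabla g (coord b) Z) x = cov a (cov b Z) x"
proof -
  have nb: "\<forall>y\<in>U. nabla g (coord b) Z y = cov b Z y"
    using nabla_coord smooth_on_differentiable[OF Z] by blast
  have "nabla g (coord b) Z differentiable at x"
    using differentiable_eq_on_open[OF U x nb] smooth_on_differentiable[OF cov_smooth[OF Z] x] by blast
  then have "nabla g (coord a) (nabla g (coord b) Z) x = cov a (nabla g (coord b) Z) x"
    by (rule nabla_coord)
  also have "\<dots> = cov a (cov b Z) x" by (rule cov_eq_on_open[OF nb x])
  finally show ?thesis .
qed

lemma Riem_apply:
  assumes Z: "smooth_on U Z" and x: "x \<in> U"
  shows "Riem a b x *v Z x = cov a (cov b Z) x - cov b (cov a Z) x"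
proof -
  have "pder [a,b] Z x = pder [b,a] Z x" by (rule pder_swap[OF U x Z])
  then show ?thesis
    unfolding cov_cov[OF Z x] Riem_def
    by (simp add: matrix_vector_mult_add_rdistrib matrix_vector_mult_diff_rdistrib
        matrix_vector_mul_assoc algebra_simps)
qed

lemma curv_coord:
  assumes Z: "smooth_on U Z" and x: "x \<in> U"
  shows "curv g (coord a) (coord b) Z x = Riem a b x *v Z x"
proof -
  have "nabla g (lie (coord a) (coord b)) Z x = 0"
    unfolding lie_coord by (rule nabla_0_left[OF smooth_on_differentiable[OF Z x]])
  then show ?thesis
    unfolding curv_def nabla_coord_nabla_coord[OF Z x] Riem_apply[OF Z x] by simp
qed

end

section \<open>Symmetries of the curvature tensor and the Bianchi identities\<close>

text \<open>The classical argument: add four instances of the first Bianchi identity.\<close>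

lemma curvature_pair_symmetry:
  fixes P :: "'a \<Rightarrow> 'a \<Rightarrow> 'a \<Rightarrow> 'a \<Rightarrow> real"
  assumes A1: "\<And>d c a b. P d c a b = - P d c b a"
    and A2: "\<And>d c a b. P d c a b = - P c d a b"
    and B: "\<And>d c a b. P d c a b + P d a b c + P d b c a = 0"
  shows "P d c a b = P a b d c"
proof -
  have swap_pairs: "P x y z w = P y x w z" for x y z w using A1[of x y z w] A2[of x y w z] by simp
  have "P d c a b + P d a b c + P d b c a = 0" "P c d b a + P c b a d + P c a d b = 0"
    "P a b d c + P a d c b + P a c b d = 0" "P b a c d + P b c d a + P b d a c = 0"
    by (rule B)+
  then show ?thesis
    using swap_pairs[of c d b a] swap_pairs[of a d c b] swap_pairs[of b d a c] swap_pairs[of b c d a]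
      swap_pairs[of a c b d] swap_pairs[of b a c d]
    by linarith
qed

context riemannian_chart begin

lemma pder_Gamma_sym_axis:
  assumes x: "x \<in> U"
  shows "pder [c] (\<Gamma> a) x *v axis b 1 = pder [c] (\<Gamma> b) x *v axis a 1"
proof -
  have e: "pder [c] (\<lambda>y. \<Gamma> a y *v axis b 1) x = pder [c] (\<Gamma> a) x *v axis b 1" for a b
    using pder_matrix_vector_mult[OF Gamma_differentiable[OF x] differentiable_const, of c a "axis b 1"] by (simp add: pder_const)
  have "pder [c] (\<lambda>y. \<Gamma> a y *v axis b 1) x = pder [c] (\<lambda>y. \<Gamma> b y *v axis a 1) x"
    by (rule pder_eq_on_open[OF U _ x]) (use Gamma_sym_axis in blast)
  then show ?thesis using e by simp
qed

lemma g_Riem_skew: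
  assumes x: "x \<in> U"
  shows "g x ** Riem a b x + transpose (g x ** Riem a b x) = 0"
proof -
  have mc: "\<forall>y\<in>U. pder [b] g y = g y ** \<Gamma> b y + transpose (\<Gamma> b y) ** g y" for b
    using metric_compatible by blast
  have dT: "(\<lambda>y. transpose (\<Gamma> b y)) differentiable at x" for b
    using differentiable_bounded_linear[OF bounded_linear_transpose Gamma_differentiable[OF x]] .
  have d2: "pder [a,b] g x = pder [a] g x ** \<Gamma> b x + g x ** pder [a] (\<Gamma> b) x
      + transpose (pder [a] (\<Gamma> b) x) ** g x + transpose (\<Gamma> b x) ** pder [a] g x" for a b
  proof -
    have "pder [a,b] g x = pder [a] (\<lambda>y. g y ** \<Gamma> b y + transpose (\<Gamma> b y) ** g y) x"
      unfolding pder_pder[symmetric] by (rule pder_eq_on_open[OF U mc x])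
    also have "\<dots> = pder [a] (\<lambda>y. g y ** \<Gamma> b y) x + pder [a] (\<lambda>y. transpose (\<Gamma> b y) ** g y) x"
      by (rule pder_add) (intro differentiable_bounded_bilinear[OF bounded_bilinear_matrix_mult] g_differentiable Gamma_differentiable dT x)+
    also have "\<dots> = pder [a] g x ** \<Gamma> b x + g x ** pder [a] (\<Gamma> b) x
      + transpose (pder [a] (\<Gamma> b) x) ** g x + transpose (\<Gamma> b x) ** pder [a] g x"
      by (simp add: pder_matrix_mult[OF g_differentiable[OF x] Gamma_differentiable[OF x]] pder_matrix_mult[OF dT g_differentiable[OF x]] pder_transpose[OF Gamma_differentiable[OF x]])
    finally show ?thesis .
  qed
  have cl: "pder [a,b] g x = pder [b,a] g x" by (rule pder_swap[OF U x g_smooth])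
  have "0 = pder [a,b] g x - pder [b,a] g x" using cl by simp
  also have "\<dots> = g x ** Riem a b x + transpose (Riem a b x) ** g x"
    unfolding d2 metric_compatible[OF x] Riem_def
    by (simp add: matrix_mult_simps transpose_add transpose_diff matrix_transpose_mul algebra_simps)
  also have "\<dots> = g x ** Riem a b x + transpose (g x ** Riem a b x)"
    by (simp add: matrix_transpose_mul g_transpose[OF x])
  finally show ?thesis by simp
qed

lemma first_bianchi:
  assumes x: "x \<in> U"
  shows "Riem a b x *v axis c 1 + Riem b c x *v axis a 1 + Riem c a x *v axis b 1 = 0"
proof -
  note s1 = pder_Gamma_sym_axis[OF x] and s2 = Gamma_sym_axis[OF x]
  show ?thesis
    unfolding Riem_def
    by (simp add: matrix_vector_mult_add_rdistrib matrix_vector_mult_diff_rdistrib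
        matrix_vector_mul_assoc[symmetric] s1 s2 algebra_simps)
qed

definition Riem_low :: "real^'m \<Rightarrow> 'm \<Rightarrow> 'm \<Rightarrow> 'm \<Rightarrow> 'm \<Rightarrow> real" where
  "Riem_low y d c a b = (g y ** Riem a b y) $ d $ c"

lemma Riem_low_pair_sym:
  assumes x: "x \<in> U"
  shows "Riem_low x d c a b = Riem_low x a b d c"
proof (rule curvature_pair_symmetry[of "Riem_low x"])
  show "Riem_low x d c a b = - Riem_low x d c b a" for d c a b
    unfolding Riem_low_def Riem_swap[of b a] by (simp add: matrix_mult_uminus_right)
  show "Riem_low x d c a b = - Riem_low x c d a b" for d c a b
  proof -
    have "(g x ** Riem a b x + transpose (g x ** Riem a b x)) $ d $ c = 0"
      using g_Riem_skew[OF x] by simp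
    then show ?thesis unfolding Riem_low_def by (simp add: transpose_nth)
  qed
  show "Riem_low x d c a b + Riem_low x d a b c + Riem_low x d b c a = 0" for d c a b
  proof -
    have "(g x *v (Riem a b x *v axis c 1 + Riem b c x *v axis a 1 + Riem c a x *v axis b 1)) $ d = 0"
      using first_bianchi[OF x] by simp
    then show ?thesis unfolding Riem_low_def matrix_mult_entry_axis by (simp add: matrix_vector_right_distrib)
  qed
qed

text \<open>
  \<open>Riem_cov c a b\<close> is the matrix of \<open>(\<nabla>\<^bsub>\<partial>\<^sub>c\<^esub> R)(\<partial>\<^sub>a, \<partial>\<^sub>b)\<close>: the covariant derivative
  \<open>Riem_cov_endo\<close> of the endomorphism field \<open>R(\<partial>\<^sub>a, \<partial>\<^sub>b)\<close>, corrected by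
  \<open>R(\<nabla>\<^bsub>\<partial>\<^sub>c\<^esub>\<partial>\<^sub>a, \<partial>\<^sub>b)\<close> and \<open>R(\<partial>\<^sub>a, \<nabla>\<^bsub>\<partial>\<^sub>c\<^esub>\<partial>\<^sub>b)\<close>.
\<close>

definition Riem_cov_endo :: "'m \<Rightarrow> 'm \<Rightarrow> 'm \<Rightarrow> real^'m \<Rightarrow> real^'m^'m" where
  "Riem_cov_endo c a b y = pder [c] (Riem a b) y + \<Gamma> c y ** Riem a b y - Riem a b y ** \<Gamma> c y"

definition Riem_cov_corr1 :: "'m \<Rightarrow> 'm \<Rightarrow> 'm \<Rightarrow> real^'m \<Rightarrow> real^'m^'m" where
  "Riem_cov_corr1 c a b y = (\<Sum>l\<in>UNIV. \<Gamma> c y $ l $ a *\<^sub>R Riem l b y)"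

definition Riem_cov_corr2 :: "'m \<Rightarrow> 'm \<Rightarrow> 'm \<Rightarrow> real^'m \<Rightarrow> real^'m^'m" where
  "Riem_cov_corr2 c a b y = (\<Sum>l\<in>UNIV. \<Gamma> c y $ l $ b *\<^sub>R Riem a l y)"

definition Riem_cov :: "'m \<Rightarrow> 'm \<Rightarrow> 'm \<Rightarrow> real^'m \<Rightarrow> real^'m^'m" where
  "Riem_cov c a b y = Riem_cov_endo c a b y - Riem_cov_corr1 c a b y - Riem_cov_corr2 c a b y"

lemma pder_Riem:
  assumes x: "x \<in> U"
  shows "pder [c] (Riem a b) x = pder [c,a] (\<Gamma> b) x - pder [c,b] (\<Gamma> a) x
     + (pder [c] (\<Gamma> a) x ** \<Gamma> b x + \<Gamma> a x ** pder [c] (\<Gamma> b) x)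
     - (pder [c] (\<Gamma> b) x ** \<Gamma> a x + \<Gamma> b x ** pder [c] (\<Gamma> a) x)"
proof -
  have d1: "(\<lambda>y. pder [a] (\<Gamma> b) y - pder [b] (\<Gamma> a) y) differentiable at x"
    using pder_Gamma_differentiable[OF x] by (intro differentiable_diff) auto
  have d2: "(\<lambda>y. \<Gamma> a y ** \<Gamma> b y) differentiable at x" for a b
    using differentiable_bounded_bilinear[OF bounded_bilinear_matrix_mult Gamma_differentiable[OF x] Gamma_differentiable[OF x]] .
  have d3: "(\<lambda>y. pder [a] (\<Gamma> b) y - pder [b] (\<Gamma> a) y + \<Gamma> a y ** \<Gamma> b y) differentiable at x"
    using d1 d2 by (intro differentiable_add) auto
  have "Riem a b = (\<lambda>y. (pder [a] (\<Gamma> b) y - pder [b] (\<Gamma> a) y + \<Gamma> a y ** \<Gamma> b y) - \<Gamma> b y ** \<Gamma> a y)"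
    by (rule ext) (simp add: Riem_def)
  then have "pder [c] (Riem a b) x = pder [c] (\<lambda>y. (pder [a] (\<Gamma> b) y - pder [b] (\<Gamma> a) y + \<Gamma> a y ** \<Gamma> b y) - \<Gamma> b y ** \<Gamma> a y) x"
    by simp
  also have "\<dots> = pder [c] (\<lambda>y. pder [a] (\<Gamma> b) y - pder [b] (\<Gamma> a) y + \<Gamma> a y ** \<Gamma> b y) x - pder [c] (\<lambda>y. \<Gamma> b y ** \<Gamma> a y) x"
    by (rule pder_diff[OF d3 d2])
  also have "pder [c] (\<lambda>y. pder [a] (\<Gamma> b) y - pder [b] (\<Gamma> a) y + \<Gamma> a y ** \<Gamma> b y) x
     = pder [c] (\<lambda>y. pder [a] (\<Gamma> b) y - pder [b] (\<Gamma> a) y) x + pder [c] (\<lambda>y. \<Gamma> a y ** \<Gamma> b y) x"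
    by (rule pder_add[OF d1 d2])
  also have "pder [c] (\<lambda>y. pder [a] (\<Gamma> b) y - pder [b] (\<Gamma> a) y) x = pder [c,a] (\<Gamma> b) x - pder [c,b] (\<Gamma> a) x"
    using pder_diff[OF pder_Gamma_differentiable[OF x] pder_Gamma_differentiable[OF x]] by (simp add: pder_pder)
  finally show ?thesis
    by (simp add: pder_matrix_mult[OF Gamma_differentiable[OF x] Gamma_differentiable[OF x]])
qed

lemma Riem_cov_endo_cyclic:
  assumes x: "x \<in> U"
  shows "Riem_cov_endo c a b x + Riem_cov_endo a b c x + Riem_cov_endo b c a x = 0"
proof -
  have cl1: "pder [c,a] (\<Gamma> b) x = pder [a,c] (\<Gamma> b) x" by (rule pder_swap[OF U x Gamma_smooth])
  have cl2: "pder [c,b] (\<Gamma> a) x = pder [b,c] (\<Gamma> a) x" by (rule pder_swap[OF U x Gamma_smooth])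
  have cl3: "pder [a,b] (\<Gamma> c) x = pder [b,a] (\<Gamma> c) x" by (rule pder_swap[OF U x Gamma_smooth])
  show ?thesis
    unfolding Riem_cov_endo_def pder_Riem[OF x] Riem_def cl1 cl2 cl3
    by (simp add: matrix_mult_simps algebra_simps)
qed

lemma Riem_cov_corr_cancel:
  assumes x: "x \<in> U"
  shows "Riem_cov_corr1 c a b x + Riem_cov_corr2 a b c x = 0"
proof -
  have "Riem_cov_corr1 c a b x + Riem_cov_corr2 a b c x = (\<Sum>l\<in>UNIV. \<Gamma> c x $ l $ a *\<^sub>R Riem l b x + \<Gamma> a x $ l $ c *\<^sub>R Riem b l x)"
    unfolding Riem_cov_corr1_def Riem_cov_corr2_def by (simp add: sum.distrib)
  also have "\<dots> = 0"
  proof (rule sum.neutral, rule ballI)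
    fix l
    have "\<Gamma> a x $ l $ c = \<Gamma> c x $ l $ a" by (rule Gamma_sym[OF x])
    then show "\<Gamma> c x $ l $ a *\<^sub>R Riem l b x + \<Gamma> a x $ l $ c *\<^sub>R Riem b l x = 0"
      by (simp add: Riem_swap[of b l])
  qed
  finally show ?thesis .
qed

lemma second_bianchi:
  assumes x: "x \<in> U"
  shows "Riem_cov c a b x + Riem_cov a b c x + Riem_cov b c a x = 0"
proof -
  have "Riem_cov c a b x + Riem_cov a b c x + Riem_cov b c a x = (Riem_cov_endo c a b x + Riem_cov_endo a b c x + Riem_cov_endo b c a x)
     - (Riem_cov_corr1 c a b x + Riem_cov_corr2 a b c x) - (Riem_cov_corr1 a b c x + Riem_cov_corr2 b c a x) - (Riem_cov_corr1 b c a x + Riem_cov_corr2 c a b x)"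
    unfolding Riem_cov_def by (simp add: algebra_simps)
  then show ?thesis using Riem_cov_endo_cyclic[OF x] Riem_cov_corr_cancel[OF x] by simp
qed

lemma Riem_cov_swap:
  assumes x: "x \<in> U"
  shows "Riem_cov c b a x = - Riem_cov c a b x"
proof -
  have "Riem b a = (\<lambda>y. - Riem a b y)" by (rule ext) (rule Riem_swap)
  then have "pder [c] (Riem b a) x = - pder [c] (Riem a b) x"
    using pder_minus[OF smooth_on_differentiable[OF Riem_smooth x]] by simp
  then have 1: "Riem_cov_endo c b a x = - Riem_cov_endo c a b x"
    unfolding Riem_cov_endo_def by (simp add: Riem_swap[of b a] matrix_mult_simps)
  have 2: "Riem_cov_corr1 c b a x = - Riem_cov_corr2 c a b x"
    unfolding Riem_cov_corr1_def Riem_cov_corr2_def by (simp add: Riem_swap[of a] sum_negf)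
  have 3: "Riem_cov_corr2 c b a x = - Riem_cov_corr1 c a b x"
    unfolding Riem_cov_corr1_def Riem_cov_corr2_def by (simp add: Riem_swap[of b] sum_negf)
  show ?thesis unfolding Riem_cov_def 1 2 3 by simp
qed
lemma Riem_cov_cyclic_swap:
  assumes x: "x \<in> U"
  shows "Riem_cov c a b x = Riem_cov b a c x - Riem_cov a b c x"
proof -
  have "Riem_cov c a b x = (Riem_cov c a b x + Riem_cov a b c x + Riem_cov b c a x)
                           - Riem_cov a b c x - Riem_cov b c a x"
    by simp
  also have "\<dots> = - Riem_cov a b c x - Riem_cov b c a x"
    using second_bianchi[OF x] by simp
  also have "Riem_cov b c a x = - Riem_cov b a c x"
    by (rule Riem_cov_swap[OF x])
  finally show ?thesis by simp
qed

text \<open>\<open>Riem_right V b\<close> is the matrix of \<open>R(\<partial>\<^sub>b, V)\<close>.\<close>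

definition Riem_right :: "(real^'m \<Rightarrow> real^'m) \<Rightarrow> 'm \<Rightarrow> real^'m \<Rightarrow> real^'m^'m" where
  "Riem_right V b y = (\<Sum>c\<in>UNIV. V y $ c *\<^sub>R Riem b c y)"

lemma pder_Riem_right:
  assumes V: "V differentiable at x" and x: "x \<in> U"
  shows "pder [a] (Riem_right V b) x = (\<Sum>c\<in>UNIV. pder [a] V x $ c *\<^sub>R Riem b c x + V x $ c *\<^sub>R pder [a] (Riem b c) x)"
proof -
  have dn: "(\<lambda>y. V y $ c) differentiable at x" for c
    using differentiable_bounded_linear[OF bounded_linear_vec_nth V] .
  have "pder [a] (Riem_right V b) x = (\<Sum>c\<in>UNIV. pder [a] (\<lambda>y. V y $ c *\<^sub>R Riem b c y) x)"
    unfolding Riem_right_def[abs_def]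
    by (rule pder_sum) (auto intro: differentiable_bounded_bilinear[OF bounded_bilinear_scaleR dn Riem_differentiable[OF x]])
  then show ?thesis
    by (simp add: pder_scaleR[OF dn Riem_differentiable[OF x]] pder_component[OF V])
qed

lemma sum_Riem_cov_endo:
  assumes V: "V differentiable at x" and x: "x \<in> U"
  shows "(\<Sum>c\<in>UNIV. V x $ c *\<^sub>R Riem_cov_endo a b c x)
     = pder [a] (Riem_right V b) x - (\<Sum>c\<in>UNIV. pder [a] V x $ c *\<^sub>R Riem b c x)
       + \<Gamma> a x ** Riem_right V b x - Riem_right V b x ** \<Gamma> a x"
  unfolding Riem_cov_endo_def pder_Riem_right[OF V x] Riem_right_def
  by (simp add: scaleR_add_right scaleR_diff_right sum.distrib sum_subtractf matrix_mult_sum_right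
      matrix_mult_sum_left matrix_mult_scaleR_right matrix_mult_scaleR_left)

lemma sum_Riem_cov_corr1:
  "(\<Sum>c\<in>UNIV. V x $ c *\<^sub>R Riem_cov_corr1 a b c x) = (\<Sum>l\<in>UNIV. \<Gamma> a x $ l $ b *\<^sub>R Riem_right V l x)"
proof -
  have "(\<Sum>c\<in>UNIV. V x $ c *\<^sub>R Riem_cov_corr1 a b c x)
        = (\<Sum>c\<in>UNIV. \<Sum>l\<in>UNIV. \<Gamma> a x $ l $ b *\<^sub>R (V x $ c *\<^sub>R Riem l c x))"
    unfolding Riem_cov_corr1_def by (simp add: scaleR_sum_right mult.commute)
  also have "\<dots> = (\<Sum>l\<in>UNIV. \<Sum>c\<in>UNIV. \<Gamma> a x $ l $ b *\<^sub>R (V x $ c *\<^sub>R Riem l c x))"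
    by (rule sum.swap)
  finally show ?thesis unfolding Riem_right_def by (simp add: scaleR_sum_right)
qed

lemma sum_Riem_cov_corr2:
  "(\<Sum>c\<in>UNIV. V x $ c *\<^sub>R Riem_cov_corr2 a b c x) = (\<Sum>l\<in>UNIV. (\<Gamma> a x *v V x) $ l *\<^sub>R Riem b l x)"
proof -
  have "(\<Sum>c\<in>UNIV. V x $ c *\<^sub>R Riem_cov_corr2 a b c x)
        = (\<Sum>c\<in>UNIV. \<Sum>l\<in>UNIV. (\<Gamma> a x $ l $ c * V x $ c) *\<^sub>R Riem b l x)"
    unfolding Riem_cov_corr2_def by (simp add: scaleR_sum_right mult.commute)
  also have "\<dots> = (\<Sum>l\<in>UNIV. \<Sum>c\<in>UNIV. (\<Gamma> a x $ l $ c * V x $ c) *\<^sub>R Riem b l x)"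
    by (rule sum.swap)
  finally show ?thesis by (simp add: matrix_vector_mult_def scaleR_sum_left)
qed

text \<open>\<open>(\<nabla>\<^bsub>\<partial>\<^sub>a\<^esub> R)(\<partial>\<^sub>b, V) = \<nabla>\<^bsub>\<partial>\<^sub>a\<^esub>(R(\<partial>\<^sub>b, V)) - R(\<nabla>\<^bsub>\<partial>\<^sub>a\<^esub>\<partial>\<^sub>b, V) - R(\<partial>\<^sub>b, \<nabla>\<^bsub>\<partial>\<^sub>a\<^esub>V)\<close>\<close>

lemma sum_Riem_cov_right:
  assumes V: "V differentiable at x" and x: "x \<in> U"
  shows "(\<Sum>c\<in>UNIV. V x $ c *\<^sub>R Riem_cov a b c x)
       = pder [a] (Riem_right V b) x + \<Gamma> a x ** Riem_right V b x - Riem_right V b x ** \<Gamma> a x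
         - (\<Sum>l\<in>UNIV. \<Gamma> a x $ l $ b *\<^sub>R Riem_right V l x) - (\<Sum>l\<in>UNIV. cov a V x $ l *\<^sub>R Riem b l x)"
proof -
  have "(\<Sum>c\<in>UNIV. V x $ c *\<^sub>R Riem_cov a b c x) = (\<Sum>c\<in>UNIV. V x $ c *\<^sub>R Riem_cov_endo a b c x)
        - (\<Sum>c\<in>UNIV. V x $ c *\<^sub>R Riem_cov_corr1 a b c x) - (\<Sum>c\<in>UNIV. V x $ c *\<^sub>R Riem_cov_corr2 a b c x)"
    unfolding Riem_cov_def by (simp add: scaleR_diff_right sum_subtractf)
  also have "\<dots> = pder [a] (Riem_right V b) x - (\<Sum>c\<in>UNIV. pder [a] V x $ c *\<^sub>R Riem b c x)
       + \<Gamma> a x ** Riem_right V b x - Riem_right V b x ** \<Gamma> a x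
       - (\<Sum>l\<in>UNIV. \<Gamma> a x $ l $ b *\<^sub>R Riem_right V l x) - (\<Sum>l\<in>UNIV. (\<Gamma> a x *v V x) $ l *\<^sub>R Riem b l x)"
    unfolding sum_Riem_cov_endo[OF V x] sum_Riem_cov_corr1 sum_Riem_cov_corr2 ..
  also have "(\<Sum>l\<in>UNIV. (\<Gamma> a x *v V x) $ l *\<^sub>R Riem b l x)
        = (\<Sum>l\<in>UNIV. cov a V x $ l *\<^sub>R Riem b l x) - (\<Sum>c\<in>UNIV. pder [a] V x $ c *\<^sub>R Riem b c x)"
    unfolding cov_def by (simp add: sum_subtractf[symmetric] scaleR_add_left)
  finally show ?thesis by (simp add: algebra_simps)
qed

section \<open>Ricci curvature in a chart\<close>

text \<open>
  \<open>Ric_cov c\<close> and \<open>Ric_sharp_cov c\<close> are the component matrices of \<open>\<nabla>\<^bsub>\<partial>\<^sub>c\<^esub> Ric\<close> and of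
  \<open>\<nabla>\<^bsub>\<partial>\<^sub>c\<^esub> Ric\<^sup>\<sharp>\<close>.
\<close>

definition Ric :: "real^'m \<Rightarrow> real^'m^'m" where
  "Ric y = (\<chi> i j. \<Sum>k\<in>UNIV. Riem k i y $ k $ j)"

definition Ric_cov :: "'m \<Rightarrow> real^'m \<Rightarrow> real^'m^'m" where
  "Ric_cov c y = pder [c] Ric y - Ric y ** \<Gamma> c y - transpose (\<Gamma> c y) ** Ric y"

definition Ric_sharp :: "real^'m \<Rightarrow> real^'m^'m" where
  "Ric_sharp y = ginv y ** transpose (Ric y)"

definition Ric_sharp_cov :: "'m \<Rightarrow> real^'m \<Rightarrow> real^'m^'m" where
  "Ric_sharp_cov c y = pder [c] Ric_sharp y + \<Gamma> c y ** Ric_sharp y - Ric_sharp y ** \<Gamma> c y"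

lemma ricci_mat_eq_Ric:
  assumes "y \<in> U"
  shows "ricci_mat g y = Ric y"
proof -
  have "curv g (coord k) (coord i) (coord j) y $ k = Riem k i y $ k $ j" for k i j
    using curv_coord[OF coord_smooth assms, of k i j]
    by (simp add: coord_def matrix_vector_mult_basis column_def)
  then show ?thesis by (simp add: vec_eq_iff Ric_def ricci_mat_def ricci_def)
qed

lemma Ric_smooth: "smooth_on U Ric"
  by (rule smooth_on_matrix[OF U])
    (simp add: Ric_def, intro smooth_on_sum[OF U] finite_class.finite_UNIV smooth_on_entry[OF U Riem_smooth])

lemma Ric_differentiable: "y \<in> U \<Longrightarrow> Ric differentiable at y"
  using smooth_on_differentiable[OF Ric_smooth] .

lemma pder_Ric:
  assumes x: "x \<in> U"
  shows "pder [c] Ric x $ i $ j = (\<Sum>k\<in>UNIV. pder [c] (Riem k i) x $ k $ j)"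
proof -
  have "pder [c] Ric x $ i $ j = pder [c] (\<lambda>y. \<Sum>k\<in>UNIV. Riem k i y $ k $ j) x"
    unfolding pder_entry[OF Ric_differentiable[OF x], symmetric] by (simp add: Ric_def)
  also have "\<dots> = (\<Sum>k\<in>UNIV. pder [c] (\<lambda>y. Riem k i y $ k $ j) x)"
    by (rule pder_sum) (auto intro!: differentiable_bounded_linear[OF bounded_linear_vec_nth] Riem_differentiable[OF x])
  finally show ?thesis by (simp add: pder_entry[OF Riem_differentiable[OF x]])
qed

lemma trace_Riem_cov_endo:
  assumes x: "x \<in> U"
  shows "(\<Sum>k\<in>UNIV. Riem_cov_endo c k i x $ k $ j)
     = pder [c] Ric x $ i $ j + (\<Sum>k\<in>UNIV. (\<Gamma> c x ** Riem k i x) $ k $ j) - (Ric x ** \<Gamma> c x) $ i $ j"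
proof -
  have "(\<Sum>k\<in>UNIV. (Riem k i x ** \<Gamma> c x) $ k $ j) = (\<Sum>k\<in>UNIV. \<Sum>l\<in>UNIV. Riem k i x $ k $ l * \<Gamma> c x $ l $ j)"
    by (simp add: matrix_matrix_mult_def)
  also have "\<dots> = (\<Sum>l\<in>UNIV. \<Sum>k\<in>UNIV. Riem k i x $ k $ l * \<Gamma> c x $ l $ j)"
    by (rule sum.swap)
  also have "\<dots> = (Ric x ** \<Gamma> c x) $ i $ j"
    by (simp add: matrix_matrix_mult_def Ric_def sum_distrib_right)
  finally show ?thesis
    unfolding Riem_cov_endo_def by (simp add: pder_Ric[OF x] sum.distrib sum_subtractf)
qed

lemma trace_Riem_cov_corr1:
  "(\<Sum>k\<in>UNIV. Riem_cov_corr1 c k i x $ k $ j) = (\<Sum>k\<in>UNIV. (\<Gamma> c x ** Riem k i x) $ k $ j)"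
proof -
  have "(\<Sum>k\<in>UNIV. Riem_cov_corr1 c k i x $ k $ j) = (\<Sum>k\<in>UNIV. \<Sum>l\<in>UNIV. \<Gamma> c x $ l $ k * Riem l i x $ k $ j)"
    by (simp add: Riem_cov_corr1_def sum_component)
  also have "\<dots> = (\<Sum>l\<in>UNIV. \<Sum>k\<in>UNIV. \<Gamma> c x $ l $ k * Riem l i x $ k $ j)"
    by (rule sum.swap)
  finally show ?thesis by (simp add: matrix_matrix_mult_def)
qed

lemma trace_Riem_cov_corr2:
  "(\<Sum>k\<in>UNIV. Riem_cov_corr2 c k i x $ k $ j) = (transpose (\<Gamma> c x) ** Ric x) $ i $ j"
proof -
  have "(\<Sum>k\<in>UNIV. Riem_cov_corr2 c k i x $ k $ j) = (\<Sum>k\<in>UNIV. \<Sum>l\<in>UNIV. \<Gamma> c x $ l $ i * Riem k l x $ k $ j)"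
    by (simp add: Riem_cov_corr2_def sum_component)
  also have "\<dots> = (\<Sum>l\<in>UNIV. \<Sum>k\<in>UNIV. \<Gamma> c x $ l $ i * Riem k l x $ k $ j)"
    by (rule sum.swap)
  finally show ?thesis by (simp add: matrix_matrix_mult_def Ric_def transpose_def sum_distrib_left)
qed

lemma trace_Riem_cov:
  "x \<in> U \<Longrightarrow> (\<Sum>k\<in>UNIV. Riem_cov c k i x $ k $ j) = Ric_cov c x $ i $ j"
  unfolding Riem_cov_def Ric_cov_def
  by (simp add: sum_subtractf trace_Riem_cov_endo trace_Riem_cov_corr1 trace_Riem_cov_corr2)

lemma sum_Ric_cov:
  assumes x: "x \<in> U"
  shows "(\<Sum>c\<in>UNIV. V x $ c *\<^sub>R Ric_cov c x) $ i $ j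
           = (\<Sum>k\<in>UNIV. (\<Sum>c\<in>UNIV. V x $ c *\<^sub>R Riem_cov c k i x) $ k $ j)"
proof -
  have "(\<Sum>c\<in>UNIV. V x $ c *\<^sub>R Ric_cov c x) $ i $ j = (\<Sum>c\<in>UNIV. \<Sum>k\<in>UNIV. V x $ c * Riem_cov c k i x $ k $ j)"
    by (simp add: sum_component trace_Riem_cov[OF x, symmetric] sum_distrib_left)
  also have "\<dots> = (\<Sum>k\<in>UNIV. \<Sum>c\<in>UNIV. V x $ c * Riem_cov c k i x $ k $ j)"
    by (rule sum.swap)
  finally show ?thesis by (simp add: sum_component)
qed

lemma Ric_sharp_smooth: "smooth_on U Ric_sharp"
  unfolding Ric_sharp_def[abs_def]
  by (intro smooth_on_matrix_mult[OF U] ginv_smooth smooth_on_transpose[OF U] Ric_smooth)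

lemma Ric_sharp_differentiable: "y \<in> U \<Longrightarrow> Ric_sharp differentiable at y"
  using smooth_on_differentiable[OF Ric_sharp_smooth] .

lemma ricci_sharp_eq_Ric_sharp: "y \<in> U \<Longrightarrow> ricci_sharp g y = Ric_sharp y"
  unfolding ricci_sharp_def Ric_sharp_def ginv_def by (simp add: ricci_mat_eq_Ric)

lemma g_Ric_sharp: "y \<in> U \<Longrightarrow> g y ** Ric_sharp y = transpose (Ric y)"
  unfolding Ric_sharp_def by (simp add: matrix_mul_assoc g_ginv)

lemma g_pder_Ric_sharp:
  assumes x: "x \<in> U"
  shows "g x ** pder [c] Ric_sharp x = transpose (pder [c] Ric x) - pder [c] g x ** Ric_sharp x"
proof -
  have "pder [c] (\<lambda>y. g y ** Ric_sharp y) x = pder [c] (\<lambda>y. transpose (Ric y)) x"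
    by (rule pder_eq_on_open[OF U _ x]) (use g_Ric_sharp in blast)
  then show ?thesis
    using pder_matrix_mult[OF g_differentiable[OF x] Ric_sharp_differentiable[OF x]]
      pder_transpose[OF Ric_differentiable[OF x]]
    by (simp add: algebra_simps)
qed

lemma g_Ric_sharp_cov:
  assumes x: "x \<in> U"
  shows "g x ** Ric_sharp_cov c x = transpose (Ric_cov c x)"
proof -
  have "g x ** (Ric_sharp x ** \<Gamma> c x) = transpose (Ric x) ** \<Gamma> c x"
    by (simp add: matrix_mul_assoc g_Ric_sharp[OF x])
  then show ?thesis
    unfolding Ric_sharp_cov_def Ric_cov_def
    by (simp add: matrix_add_ldistrib matrix_diff_ldistrib g_pder_Ric_sharp[OF x] metric_compatible[OF x]
        matrix_add_rdistrib matrix_mul_assoc[symmetric] g_Ric_sharp[OF x] transpose_diff matrix_transpose_mul)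
qed

lemma nabla_ricci_sharp_coord:
  assumes x: "x \<in> U"
  shows "nabla g V (\<lambda>y. ricci_sharp g y *v coord j y) x - ricci_sharp g x *v nabla g V (coord j) x
           = (\<Sum>c\<in>UNIV. V x $ c *\<^sub>R Ric_sharp_cov c x) *v axis j 1"
proof -
  define F where "F y = Ric_sharp y *v axis j 1" for y
  have eq: "\<forall>y\<in>U. ricci_sharp g y *v coord j y = F y"
    unfolding F_def coord_def using ricci_sharp_eq_Ric_sharp by simp
  have dF: "F differentiable at x" unfolding F_def
    using differentiable_bounded_bilinear[OF bounded_bilinear_matrix_vector_mult
        Ric_sharp_differentiable[OF x] differentiable_const] .
  have cov_F: "cov c F x = pder [c] Ric_sharp x *v axis j 1 + \<Gamma> c x *v F x" for c
    unfolding cov_def F_def[abs_def]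
    using pder_matrix_vector_mult[OF Ric_sharp_differentiable[OF x] differentiable_const] by simp
  have "nabla g V (\<lambda>y. ricci_sharp g y *v coord j y) x = nabla g V F x"
    unfolding nabla_def dirD_def using frechet_derivative_eq_on_open[OF U x eq] eq x by simp
  also have "\<dots> = (\<Sum>c\<in>UNIV. V x $ c *\<^sub>R (pder [c] Ric_sharp x *v axis j 1 + \<Gamma> c x *v F x))"
    by (simp add: nabla_eq_sum_cov[OF dF] cov_F)
  finally have "nabla g V (\<lambda>y. ricci_sharp g y *v coord j y) x
      = (\<Sum>c\<in>UNIV. V x $ c *\<^sub>R (pder [c] Ric_sharp x *v axis j 1 + \<Gamma> c x *v (Ric_sharp x *v axis j 1)))"
    by (simp add: F_def)
  moreover have "nabla g V (coord j) x = (\<Sum>c\<in>UNIV. V x $ c *\<^sub>R (\<Gamma> c x *v axis j 1))"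
    by (simp add: nabla_eq_sum_cov cov_def coord_def)
  ultimately show ?thesis
    by (simp add: ricci_sharp_eq_Ric_sharp[OF x] Ric_sharp_cov_def sum_matrix_vector_mult
        matrix_scaleR_vector_mult matrix_vector_mult_add_rdistrib matrix_vector_mult_diff_rdistrib
        matrix_vector_mul_assoc scaleR_diff_right sum_subtractf matrix_vector_mult_sum_scaleR[symmetric]
        scaleR_add_right sum.distrib)
qed

lemma scal_einstein:
  assumes x: "x \<in> U" and "ricci_mat g x = c *\<^sub>R g x"
  shows "scal g x = c * real CARD('m)"
proof -
  have "scal g x = (\<Sum>i\<in>UNIV. \<Sum>j\<in>UNIV. ginv x $ i $ j * (c * g x $ i $ j))"
    unfolding scal_def assms(2) ginv_def by simp
  also have "\<dots> = c * (\<Sum>i\<in>UNIV. (ginv x ** g x) $ i $ i)"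
    by (simp add: matrix_matrix_mult_def sum_distrib_left g_sym[OF x] algebra_simps)
  finally show ?thesis by (simp add: ginv_g[OF x] mat_def)
qed

end

section \<open>Weak \<open>\<beta>\<close>-Kenmotsu charts\<close>

locale weak_beta_kenmotsu_chart = riemannian_chart U g for U :: "(real^'m::finite) set" and g +
  fixes n :: nat and \<beta> :: real and f Q :: "real^'m \<Rightarrow> real^'m^'m" and \<xi> \<eta> :: "real^'m \<Rightarrow> real^'m"
  assumes kenmotsu_structure: "weak_beta_kenmotsu n U \<beta> f Q \<xi> \<eta> g"
begin

lemma almost_contact: "weak_almost_contact_metric n U f Q \<xi> \<eta> g"
  using kenmotsu_structure unfolding weak_beta_kenmotsu_def by blast

lemma kenmotsu:
  "smooth_on U X \<Longrightarrow> smooth_on U Y \<Longrightarrow> x \<in> U \<Longrightarrow>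
   nabla g X (\<lambda>y. f y *v Y y) x - f x *v nabla g X Y x
     = \<beta> *\<^sub>R (gmet (g x) (f x *v X x) (Y x) *\<^sub>R \<xi> x - (\<eta> x \<bullet> Y x) *\<^sub>R (f x *v X x))"
  using kenmotsu_structure unfolding weak_beta_kenmotsu_def by blast

lemma card_dim: "CARD('m) = 2 * n + 1"
  using almost_contact unfolding weak_almost_contact_metric_def by blast

lemma f_smooth: "smooth_on U f"
  using almost_contact unfolding weak_almost_contact_metric_def by blast

lemma xi_smooth: "smooth_on U \<xi>"
  using almost_contact unfolding weak_almost_contact_metric_def by blast

lemma eta_smooth: "smooth_on U \<eta>"
  using almost_contact unfolding weak_almost_contact_metric_def by blast

lemma f_differentiable: "y \<in> U \<Longrightarrow> f differentiable at y"
  using smooth_on_differentiable[OF f_smooth] .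

lemma xi_differentiable: "y \<in> U \<Longrightarrow> \<xi> differentiable at y"
  using smooth_on_differentiable[OF xi_smooth] .

lemma eta_differentiable: "y \<in> U \<Longrightarrow> \<eta> differentiable at y"
  using smooth_on_differentiable[OF eta_smooth] .

context
  fixes y assumes y: "y \<in> U"
begin

lemma rank_f: "rank (f y) = 2 * n"
  using almost_contact y unfolding weak_almost_contact_metric_def by blast

lemma eta_xi: "\<eta> y \<bullet> \<xi> y = 1"
  using almost_contact y unfolding weak_almost_contact_metric_def by blast

lemma Q_xi: "Q y *v \<xi> y = \<xi> y"
  using almost_contact y unfolding weak_almost_contact_metric_def by blast

lemma Q_invertible: "invertible (Q y)"
  using almost_contact y unfolding weak_almost_contact_metric_def by blast

lemma eta_f_ker_eta: "\<eta> y \<bullet> v = 0 \<Longrightarrow> \<eta> y \<bullet> (f y *v v) = 0"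
  using almost_contact y unfolding weak_almost_contact_metric_def by blast

lemma g_f_f: "gmet (g y) (f y *v u) (f y *v v) = gmet (g y) u (Q y *v v) - (\<eta> y \<bullet> u) * (\<eta> y \<bullet> v)"
  using almost_contact y unfolding weak_almost_contact_metric_def by blast

lemma f_f: "f y *v (f y *v v) = - (Q y *v v) + (\<eta> y \<bullet> v) *\<^sub>R \<xi> y"
proof -
  have "f y ** f y = - Q y + outer (\<xi> y) (\<eta> y)"
    using almost_contact y unfolding weak_almost_contact_metric_def outer_def by blast
  then show ?thesis
    by (simp add: matrix_vector_mul_assoc matrix_vector_mult_diff_rdistrib outer_matrix_vector_mult)
qed

lemma f_eta_injective: "f y *v v = 0 \<Longrightarrow> \<eta> y \<bullet> v = 0 \<Longrightarrow> v = 0"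
  using f_f[of v] invertible_matrix_vector_mult_eq_0[OF Q_invertible] by simp

text \<open>\<open>f\<close> has a one-dimensional kernel, and \<open>Q\<close> maps its normalised generator to \<open>\<xi>\<close>.\<close>

lemma f_xi: "f y *v \<xi> y = 0"
proof -
  have "rank (f y) \<noteq> CARD('m)" using rank_f card_dim by simp
  then obtain k where k: "k \<noteq> 0" "f y *v k = 0" using matrix_nonfull_linear_equations_eq by blast
  have ek: "\<eta> y \<bullet> k \<noteq> 0" using f_eta_injective[OF k(2)] k(1) by blast
  define k' where "k' = (1 / (\<eta> y \<bullet> k)) *\<^sub>R k"
  have fk': "f y *v k' = 0" unfolding k'_def by (simp add: matrix_vector_mult_scaleR k(2))
  have "\<eta> y \<bullet> k' = 1" unfolding k'_def using ek by simp
  then have "Q y *v k' = \<xi> y" using f_f[of k'] fk' by simp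
  then have "Q y *v (k' - \<xi> y) = 0" using Q_xi by (simp add: matrix_vector_mult_diff_distrib)
  then have "k' - \<xi> y = 0" using invertible_matrix_vector_mult_eq_0[OF Q_invertible] by blast
  then show ?thesis using fk' by simp
qed

lemma f_kernel: "f y *v v = 0 \<Longrightarrow> v = (\<eta> y \<bullet> v) *\<^sub>R \<xi> y"
  using f_eta_injective[of "v - (\<eta> y \<bullet> v) *\<^sub>R \<xi> y"] f_xi eta_xi
  by (simp add: matrix_vector_mult_diff_distrib matrix_vector_mult_scaleR inner_diff_right)

lemma eta_f: "\<eta> y \<bullet> (f y *v u) = 0"
proof -
  have "f y *v u = f y *v (u - (\<eta> y \<bullet> u) *\<^sub>R \<xi> y)"
    using f_xi by (simp add: matrix_vector_mult_diff_distrib matrix_vector_mult_scaleR)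
  then show ?thesis
    using eta_f_ker_eta[of "u - (\<eta> y \<bullet> u) *\<^sub>R \<xi> y"] eta_xi by (simp add: inner_diff_right)
qed

lemma g_xi: "g y *v \<xi> y = \<eta> y"
proof -
  have "u \<bullet> (g y *v \<xi> y - \<eta> y) = 0" for u
    using g_f_f[of u "\<xi> y"] f_xi Q_xi eta_xi unfolding gmet_def
    by (simp add: inner_diff_right inner_commute)
  then show ?thesis using inner_eq_zero_iff by (metis eq_iff_diff_eq_0)
qed

lemma xi_unit: "\<xi> y \<bullet> (g y *v \<xi> y) = 1"
  using g_xi eta_xi by (simp add: inner_commute)

end

section \<open>The derivative of \<open>\<xi>\<close> and the curvature on \<open>\<xi>\<close>\<close>

lemma eta_cov_xi:
  assumes x: "x \<in> U"
  shows "\<eta> x \<bullet> cov a \<xi> x = 0"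
proof -
  have dGx: "(\<lambda>y. g y *v \<xi> y) differentiable at x"
    using differentiable_bounded_bilinear[OF bounded_bilinear_matrix_vector_mult
        g_differentiable[OF x] xi_differentiable[OF x]] .
  have "pder [a] (\<lambda>y. \<xi> y \<bullet> (g y *v \<xi> y)) x = pder [a] (\<lambda>y. 1::real) x"
    by (rule pder_eq_on_open[OF U _ x]) (use xi_unit in blast)
  then have "0 = pder [a] \<xi> x \<bullet> (g x *v \<xi> x) + \<xi> x \<bullet> pder [a] (\<lambda>y. g y *v \<xi> y) x"
    by (simp add: pder_inner[OF xi_differentiable[OF x] dGx])
  also have "\<dots> = pder [a] \<xi> x \<bullet> \<eta> x + \<xi> x \<bullet> (pder [a] g x *v \<xi> x + g x *v pder [a] \<xi> x)"
    by (simp add: pder_matrix_vector_mult[OF g_differentiable[OF x] xi_differentiable[OF x]] g_xi[OF x])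
  also have "\<dots> = 2 * (\<eta> x \<bullet> cov a \<xi> x)"
  proof -
    have 1: "\<xi> x \<bullet> (g x *v v) = \<eta> x \<bullet> v" for v
      using inner_matrix_vector_mult_transpose[of "\<xi> x" "g x" v] g_transpose[OF x] g_xi[OF x] by simp
    have 2: "\<xi> x \<bullet> (v v* \<Gamma> a x) = (\<Gamma> a x *v \<xi> x) \<bullet> v" for v
      by (metis dot_lmul_matrix inner_commute)
    show ?thesis
      unfolding metric_compatible[OF x] cov_def
      by (simp add: matrix_vector_mult_add_rdistrib matrix_vector_mul_assoc[symmetric] inner_add_right 1 2
          g_xi[OF x] inner_commute[of "pder [a] \<xi> x"] inner_commute[of "\<Gamma> a x *v \<xi> x"])
  qed
  finally show ?thesis by simp
qed

text \<open>
  Taking \<open>X = \<partial>\<^sub>a\<close>, \<open>Y = \<xi>\<close> in the Kenmotsu condition gives \<open>f (\<nabla>\<^bsub>\<partial>\<^sub>a\<^esub>\<xi> - \<beta> \<partial>\<^sub>a) = 0\<close>,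
  so \<open>\<nabla>\<^bsub>\<partial>\<^sub>a\<^esub>\<xi> - \<beta> \<partial>\<^sub>a\<close> is a multiple of \<open>\<xi>\<close>; the multiple is read off with \<open>\<eta>\<close>.
\<close>

lemma cov_xi:
  assumes x: "x \<in> U"
  shows "cov a \<xi> x = \<beta> *\<^sub>R (axis a 1 - (\<eta> x $ a) *\<^sub>R \<xi> x)"
proof -
  have dfx: "(\<lambda>y. f y *v \<xi> y) differentiable at x"
    using differentiable_bounded_bilinear[OF bounded_bilinear_matrix_vector_mult
        f_differentiable[OF x] xi_differentiable[OF x]] .
  have "pder [a] (\<lambda>y. f y *v \<xi> y) x = pder [a] (\<lambda>y. 0) x"
    by (rule pder_eq_on_open[OF U _ x]) (use f_xi in blast)
  then have "nabla g (coord a) (\<lambda>y. f y *v \<xi> y) x = 0"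
    unfolding nabla_coord[OF dfx] cov_def using f_xi[OF x] by simp
  moreover have "gmet (g x) (f x *v coord a x) (\<xi> x) = 0"
    unfolding gmet_def g_xi[OF x] using eta_f[OF x, of "coord a x"] by (simp add: inner_commute)
  moreover have "nabla g (coord a) \<xi> x = cov a \<xi> x"
    by (rule nabla_coord[OF xi_differentiable[OF x]])
  ultimately have "- (f x *v cov a \<xi> x) = \<beta> *\<^sub>R (- (f x *v axis a 1))"
    using kenmotsu[OF coord_smooth xi_smooth x, of a] eta_xi[OF x] by (simp add: coord_def)
  then have "f x *v (cov a \<xi> x - \<beta> *\<^sub>R axis a 1) = 0"
    by (simp add: matrix_vector_mult_diff_distrib matrix_vector_mult_scaleR)
  then have "cov a \<xi> x - \<beta> *\<^sub>R axis a 1 = (\<eta> x \<bullet> (cov a \<xi> x - \<beta> *\<^sub>R axis a 1)) *\<^sub>R \<xi> x"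
    by (rule f_kernel[OF x])
  also have "\<eta> x \<bullet> (cov a \<xi> x - \<beta> *\<^sub>R axis a 1) = - \<beta> * (\<eta> x $ a)"
    using eta_cov_xi[OF x, of a] by (simp add: inner_diff_right inner_axis)
  finally show ?thesis by (simp add: algebra_simps)
qed

lemma pder_xi: "x \<in> U \<Longrightarrow> pder [a] \<xi> x = \<beta> *\<^sub>R (axis a 1 - (\<eta> x $ a) *\<^sub>R \<xi> x) - \<Gamma> a x *v \<xi> x"
  using cov_xi[of x a] unfolding cov_def by (simp add: algebra_simps)

lemma pder_eta:
  assumes x: "x \<in> U"
  shows "pder [a] \<eta> x = transpose (\<Gamma> a x) *v \<eta> x + \<beta> *\<^sub>R (g x *v axis a 1 - (\<eta> x $ a) *\<^sub>R \<eta> x)"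
proof -
  have "pder [a] \<eta> x = pder [a] (\<lambda>y. g y *v \<xi> y) x"
    by (rule pder_eq_on_open[OF U _ x]) (use g_xi in auto)
  also have "\<dots> = pder [a] g x *v \<xi> x + g x *v pder [a] \<xi> x"
    by (rule pder_matrix_vector_mult[OF g_differentiable[OF x] xi_differentiable[OF x]])
  also have "\<dots> = transpose (\<Gamma> a x) *v \<eta> x + \<beta> *\<^sub>R (g x *v axis a 1 - (\<eta> x $ a) *\<^sub>R \<eta> x)"
    unfolding metric_compatible[OF x] pder_xi[OF x]
    by (simp add: matrix_vector_mult_add_rdistrib matrix_vector_right_distrib matrix_vector_mult_diff_distrib
        matrix_vector_mult_scaleR matrix_vector_mul_assoc[symmetric] g_xi[OF x] algebra_simps)
  finally show ?thesis .
qed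

lemma pder_eta_sym:
  assumes x: "x \<in> U"
  shows "pder [a] \<eta> x $ b = pder [b] \<eta> x $ a"
proof -
  have "(transpose (\<Gamma> a x) *v \<eta> x) $ b = (transpose (\<Gamma> b x) *v \<eta> x) $ a"
    by (simp add: matrix_vector_mult_def transpose_def Gamma_sym[OF x, of a _ b])
  moreover have "(g x *v axis a 1) $ b = (g x *v axis b 1) $ a"
    by (simp add: matrix_vector_mult_basis column_def g_sym[OF x])
  ultimately show ?thesis unfolding pder_eta[OF x] by (simp add: algebra_simps)
qed

lemma cov_cov_xi:
  assumes x: "x \<in> U"
  shows "cov a (cov b \<xi>) x
           = \<beta> *\<^sub>R (\<Gamma> a x *v axis b 1 - (pder [a] \<eta> x $ b) *\<^sub>R \<xi> x - (\<eta> x $ b) *\<^sub>R cov a \<xi> x)"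
proof -
  define V where "V y = axis b 1 - (\<eta> y $ b) *\<^sub>R \<xi> y" for y
  have de: "(\<lambda>y. \<eta> y $ b) differentiable at x"
    using differentiable_bounded_linear[OF bounded_linear_vec_nth eta_differentiable[OF x]] .
  have d1: "(\<lambda>y. (\<eta> y $ b) *\<^sub>R \<xi> y) differentiable at x"
    using differentiable_bounded_bilinear[OF bounded_bilinear_scaleR de xi_differentiable[OF x]] .
  then have dV: "V differentiable at x" unfolding V_def by (intro differentiable_diff) auto
  have "pder [a] V x = - (pder [a] \<eta> x $ b *\<^sub>R \<xi> x + (\<eta> x $ b) *\<^sub>R pder [a] \<xi> x)"
    unfolding V_def[abs_def]
    by (simp add: pder_diff[OF differentiable_const d1] pder_scaleR[OF de xi_differentiable[OF x]]
        pder_component[OF eta_differentiable[OF x]])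
  then have "pder [a] (\<lambda>y. \<beta> *\<^sub>R V y) x = \<beta> *\<^sub>R - (pder [a] \<eta> x $ b *\<^sub>R \<xi> x + (\<eta> x $ b) *\<^sub>R pder [a] \<xi> x)"
    by (simp only: pder_scaleR_const[OF dV])
  moreover have "cov a (cov b \<xi>) x = cov a (\<lambda>y. \<beta> *\<^sub>R V y) x"
    by (rule cov_eq_on_open) (use cov_xi x in \<open>auto simp: V_def\<close>)
  ultimately have "cov a (cov b \<xi>) x
      = \<beta> *\<^sub>R - (pder [a] \<eta> x $ b *\<^sub>R \<xi> x + (\<eta> x $ b) *\<^sub>R pder [a] \<xi> x) + \<Gamma> a x *v (\<beta> *\<^sub>R V x)"
    by (simp add: cov_def[of a "\<lambda>y. \<beta> *\<^sub>R V y" x])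
  then show ?thesis
    unfolding V_def cov_def[of a \<xi> x]
    by (simp add: matrix_vector_right_distrib matrix_vector_mult_diff_distrib matrix_vector_mult_scaleR
        algebra_simps)
qed

lemma Riem_apply_xi:
  assumes x: "x \<in> U"
  shows "Riem a b x *v \<xi> x = \<beta>\<^sup>2 *\<^sub>R ((\<eta> x $ a) *\<^sub>R axis b 1 - (\<eta> x $ b) *\<^sub>R axis a 1)"
  unfolding Riem_apply[OF xi_smooth x] cov_cov_xi[OF x] cov_xi[OF x] pder_eta_sym[OF x, of a b]
    Gamma_sym_axis[OF x, of a b]
  by (simp add: power2_eq_square algebra_simps)

section \<open>The covariant derivative of the Ricci tensor along \<open>\<xi>\<close>\<close>

lemma g_Riem_right_xi:
  assumes x: "x \<in> U"
  shows "(g x ** Riem_right \<xi> b x) $ d $ z = \<beta>\<^sup>2 * (\<eta> x $ d * g x $ b $ z - \<eta> x $ z * g x $ b $ d)"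
proof -
  have "(g x ** Riem_right \<xi> b x) $ d $ z = (\<Sum>c\<in>UNIV. \<xi> x $ c * Riem_low x d z b c)"
    unfolding Riem_right_def matrix_mult_sum_right matrix_mult_scaleR_right Riem_low_def
    by (simp add: sum_component)
  also have "\<dots> = (\<Sum>c\<in>UNIV. \<xi> x $ c * Riem_low x b c d z)"
    using Riem_low_pair_sym[OF x] by simp
  also have "\<dots> = ((g x ** Riem d z x) *v \<xi> x) $ b"
    unfolding Riem_low_def by (simp add: matrix_vector_mult_def mult.commute)
  also have "\<dots> = (g x *v (Riem d z x *v \<xi> x)) $ b"
    by (simp add: matrix_vector_mul_assoc)
  also have "\<dots> = \<beta>\<^sup>2 * (\<eta> x $ d * g x $ b $ z - \<eta> x $ z * g x $ b $ d)"
    unfolding Riem_apply_xi[OF x]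
    by (simp add: matrix_vector_right_distrib matrix_vector_mult_diff_distrib matrix_vector_mult_scaleR
        matrix_vector_mult_basis column_def algebra_simps)
  finally show ?thesis .
qed

lemma Riem_right_xi:
  assumes x: "x \<in> U"
  shows "Riem_right \<xi> b x = \<beta>\<^sup>2 *\<^sub>R (outer (\<xi> x) (g x *v axis b 1) - outer (axis b 1) (\<eta> x))"
proof -
  have "g x ** Riem_right \<xi> b x = g x ** (\<beta>\<^sup>2 *\<^sub>R (outer (\<xi> x) (g x *v axis b 1) - outer (axis b 1) (\<eta> x)))"
    by (simp add: vec_eq_iff g_Riem_right_xi[OF x] matrix_mult_scaleR_right matrix_diff_ldistrib
        matrix_times_outer outer_nth g_xi[OF x] matrix_vector_mult_basis column_def
        g_sym[OF x, of _ b] algebra_simps)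
  then have "ginv x ** (g x ** Riem_right \<xi> b x)
      = ginv x ** (g x ** (\<beta>\<^sup>2 *\<^sub>R (outer (\<xi> x) (g x *v axis b 1) - outer (axis b 1) (\<eta> x))))"
    by simp
  then show ?thesis by (simp add: matrix_mul_assoc ginv_g[OF x])
qed

lemma pder_Riem_right_xi:
  assumes x: "x \<in> U"
  shows "pder [a] (Riem_right \<xi> b) x = \<beta>\<^sup>2 *\<^sub>R (outer (pder [a] \<xi> x) (g x *v axis b 1)
           + outer (\<xi> x) (pder [a] g x *v axis b 1) - outer (axis b 1) (pder [a] \<eta> x))"
proof -
  have dGb: "(\<lambda>y. g y *v axis b 1) differentiable at x"
    using differentiable_bounded_bilinear[OF bounded_bilinear_matrix_vector_mult g_differentiable[OF x]
        differentiable_const] .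
  have d1: "(\<lambda>y. outer (\<xi> y) (g y *v axis b 1)) differentiable at x"
    using differentiable_bounded_bilinear[OF bounded_bilinear_outer xi_differentiable[OF x] dGb] .
  have d2: "(\<lambda>y. outer (axis b 1) (\<eta> y)) differentiable at x"
    using differentiable_bounded_bilinear[OF bounded_bilinear_outer differentiable_const eta_differentiable[OF x]] .
  have "pder [a] (Riem_right \<xi> b) x
        = pder [a] (\<lambda>y. \<beta>\<^sup>2 *\<^sub>R (outer (\<xi> y) (g y *v axis b 1) - outer (axis b 1) (\<eta> y))) x"
    by (rule pder_eq_on_open[OF U _ x]) (use Riem_right_xi in blast)
  also have "\<dots> = \<beta>\<^sup>2 *\<^sub>R (pder [a] (\<lambda>y. outer (\<xi> y) (g y *v axis b 1)) x - pder [a] (\<lambda>y. outer (axis b 1) (\<eta> y)) x)"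
    using pder_scaleR_const[OF differentiable_diff[OF d1 d2]] pder_diff[OF d1 d2] by simp
  finally show ?thesis
    by (simp add: pder_bilinear[OF bounded_bilinear_outer xi_differentiable[OF x] dGb]
        pder_bilinear[OF bounded_bilinear_outer differentiable_const eta_differentiable[OF x]]
        pder_matrix_vector_mult[OF g_differentiable[OF x] differentiable_const] outer_0_left algebra_simps)
qed

lemma sum_cov_xi_Riem:
  assumes x: "x \<in> U"
  shows "(\<Sum>l\<in>UNIV. cov a \<xi> x $ l *\<^sub>R Riem b l x) = \<beta> *\<^sub>R Riem b a x - (\<beta> * \<eta> x $ a) *\<^sub>R Riem_right \<xi> b x"
proof -
  have "(\<Sum>l\<in>UNIV. cov a \<xi> x $ l *\<^sub>R Riem b l x)
        = (\<Sum>l\<in>UNIV. \<beta> *\<^sub>R (axis a 1 $ l *\<^sub>R Riem b l x) - (\<beta> * \<eta> x $ a) *\<^sub>R (\<xi> x $ l *\<^sub>R Riem b l x))"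
    unfolding cov_xi[OF x] by (rule sum.cong) (auto simp: algebra_simps)
  also have "\<dots> = \<beta> *\<^sub>R (\<Sum>l\<in>UNIV. axis a 1 $ l *\<^sub>R Riem b l x) - (\<beta> * \<eta> x $ a) *\<^sub>R Riem_right \<xi> b x"
    unfolding Riem_right_def by (simp add: sum_subtractf scaleR_sum_right)
  finally show ?thesis by (simp add: sum_axis_scaleR)
qed

lemma sum_Gamma_Riem_right_xi:
  assumes x: "x \<in> U"
  shows "(\<Sum>l\<in>UNIV. \<Gamma> a x $ l $ b *\<^sub>R Riem_right \<xi> l x)
     = \<beta>\<^sup>2 *\<^sub>R (outer (\<xi> x) (g x *v (\<Gamma> a x *v axis b 1)) - outer (\<Gamma> a x *v axis b 1) (\<eta> x))"
proof -
  have "(\<Sum>l\<in>UNIV. \<Gamma> a x $ l $ b *\<^sub>R Riem_right \<xi> l x)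
     = \<beta>\<^sup>2 *\<^sub>R ((\<Sum>l\<in>UNIV. \<Gamma> a x $ l $ b *\<^sub>R outer (\<xi> x) (g x *v axis l 1))
                - (\<Sum>l\<in>UNIV. \<Gamma> a x $ l $ b *\<^sub>R outer (axis l 1) (\<eta> x)))"
    unfolding Riem_right_xi[OF x] by (simp add: scaleR_sum_right sum_subtractf algebra_simps)
  then show ?thesis
    unfolding sum_outer_right sum_outer_left matrix_vector_mult_sum_scaleR sum_column_axis .
qed

lemma Riem_cov_xi_right:
  assumes x: "x \<in> U"
  shows "(\<Sum>c\<in>UNIV. \<xi> x $ c *\<^sub>R Riem_cov a b c x)
     = \<beta>^3 *\<^sub>R (outer (axis a 1 - (\<eta> x $ a) *\<^sub>R \<xi> x) (g x *v axis b 1)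
                - outer (axis b 1) (g x *v axis a 1 - (\<eta> x $ a) *\<^sub>R \<eta> x))
       - \<beta> *\<^sub>R (Riem b a x - (\<eta> x $ a) *\<^sub>R Riem_right \<xi> b x)"
  unfolding sum_Riem_cov_right[OF xi_differentiable[OF x] x] sum_cov_xi_Riem[OF x]
    sum_Gamma_Riem_right_xi[OF x] pder_Riem_right_xi[OF x]
  unfolding Riem_right_xi[OF x] metric_compatible[OF x] pder_xi[OF x] pder_eta[OF x]
  by (simp add: outer_simps matrix_mult_simps matrix_vector_mult_add_rdistrib matrix_vector_right_distrib
      matrix_vector_mult_diff_distrib matrix_vector_mult_scaleR matrix_vector_mul_assoc[symmetric]
      g_xi[OF x] power2_eq_square power3_eq_cube algebra_simps)

lemma Riem_cov_along_xi:
  assumes x: "x \<in> U"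
  shows "(\<Sum>c\<in>UNIV. \<xi> x $ c *\<^sub>R Riem_cov c a b x)
     = (- 2 * \<beta>) *\<^sub>R Riem a b x
       + (2 * \<beta>^3) *\<^sub>R (outer (axis b 1) (g x *v axis a 1) - outer (axis a 1) (g x *v axis b 1))"
proof -
  have "(\<Sum>c\<in>UNIV. \<xi> x $ c *\<^sub>R Riem_cov c a b x)
        = (\<Sum>c\<in>UNIV. \<xi> x $ c *\<^sub>R Riem_cov b a c x) - (\<Sum>c\<in>UNIV. \<xi> x $ c *\<^sub>R Riem_cov a b c x)"
    by (simp add: Riem_cov_cyclic_swap[OF x, of _ a b] scaleR_diff_right sum_subtractf)
  then show ?thesis
    unfolding Riem_cov_xi_right[OF x] Riem_right_xi[OF x] Riem_swap[of b a]
    by (simp add: outer_simps power2_eq_square power3_eq_cube algebra_simps two_times_matrix)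
qed

lemma Ric_cov_along_xi:
  assumes x: "x \<in> U"
  shows "(\<Sum>c\<in>UNIV. \<xi> x $ c *\<^sub>R Ric_cov c x) = (- 2 * \<beta>) *\<^sub>R Ric x - (4 * real n * \<beta>^3) *\<^sub>R g x"
proof -
  have "(\<Sum>c\<in>UNIV. \<xi> x $ c *\<^sub>R Ric_cov c x) $ i $ j
     = ((- 2 * \<beta>) *\<^sub>R Ric x - (4 * real n * \<beta>^3) *\<^sub>R g x) $ i $ j" for i j
  proof -
    have "(\<Sum>c\<in>UNIV. \<xi> x $ c *\<^sub>R Ric_cov c x) $ i $ j
        = (\<Sum>k\<in>UNIV. ((- 2 * \<beta>) *\<^sub>R Riem k i x
             + (2 * \<beta>^3) *\<^sub>R (outer (axis i 1) (g x *v axis k 1) - outer (axis k 1) (g x *v axis i 1))) $ k $ j)"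
      unfolding sum_Ric_cov[OF x] Riem_cov_along_xi[OF x] ..
    also have "\<dots> = (- 2 * \<beta>) * Ric x $ i $ j
        + (2 * \<beta>^3) * ((\<Sum>k\<in>UNIV. axis i 1 $ k * g x $ j $ k) - real CARD('m) * g x $ j $ i)"
      by (simp add: outer_nth matrix_vector_mult_basis column_def Ric_def sum.distrib sum_subtractf
          sum_distrib_left sum_negf algebra_simps)
    also have "(\<Sum>k\<in>UNIV. axis i 1 $ k * g x $ j $ k) = g x $ j $ i"
      using sum_axis_scaleR[of i "\<lambda>k. g x $ j $ k"] by simp
    finally show ?thesis using card_dim g_sym[OF x, of j i] by (simp add: algebra_simps)
  qed
  then show ?thesis by (simp add: vec_eq_iff)
qed

lemma sum_xi_Ric_sharp_cov_eq_0:
  assumes "\<forall>X. smooth_on U X \<longrightarrow> (\<forall>x\<in>U.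
             nabla g \<xi> (\<lambda>y. ricci_sharp g y *v X y) x - ricci_sharp g x *v nabla g \<xi> X x = 0)"
    and x: "x \<in> U"
  shows "(\<Sum>c\<in>UNIV. \<xi> x $ c *\<^sub>R Ric_sharp_cov c x) = 0"
  using assms(1)[rule_format, OF coord_smooth x] nabla_ricci_sharp_coord[OF x]
  by (intro matrix_eq_0_if_columns) metis

lemma Ric_einstein:
  assumes x: "x \<in> U" and "\<beta> \<noteq> 0" and parallel: "(\<Sum>c\<in>UNIV. \<xi> x $ c *\<^sub>R Ric_sharp_cov c x) = 0"
  shows "Ric x = (- 2 * real n * \<beta>\<^sup>2) *\<^sub>R g x"
proof -
  have "0 = transpose (g x ** (\<Sum>c\<in>UNIV. \<xi> x $ c *\<^sub>R Ric_sharp_cov c x))"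
    by (simp add: parallel transpose_0)
  also have "\<dots> = (\<Sum>c\<in>UNIV. \<xi> x $ c *\<^sub>R Ric_cov c x)"
    by (simp add: matrix_mult_sum_right matrix_mult_scaleR_right transpose_sum transpose_scalar g_Ric_sharp_cov[OF x])
  also have "\<dots> = (- 2 * \<beta>) *\<^sub>R Ric x - (4 * real n * \<beta>^3) *\<^sub>R g x"
    by (rule Ric_cov_along_xi[OF x])
  finally have "(2 * \<beta>) *\<^sub>R Ric x = (2 * \<beta>) *\<^sub>R ((- 2 * real n * \<beta>\<^sup>2) *\<^sub>R g x)"
    by (simp add: power2_eq_square power3_eq_cube algebra_simps)
  then have "Ric x = (- 2 * real n * \<beta>\<^sup>2) *\<^sub>R g x \<or> 2 * \<beta> = 0"
    by (simp only: scaleR_cancel_left)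
  then show ?thesis using \<open>\<beta> \<noteq> 0\<close> by simp
qed

end

theorem mainTheorem17:
  fixes n :: nat and U :: "(real^'m::finite) set" and \<beta> :: real
    and f Q g :: "real^'m \<Rightarrow> real^'m^'m" and \<xi> \<eta> :: "real^'m \<Rightarrow> real^'m"
  assumes "weak_beta_kenmotsu n U \<beta> f Q \<xi> \<eta> g"
    and "\<beta> \<noteq> 0"
    and "\<forall>X. smooth_on U X \<longrightarrow> (\<forall>x\<in>U.
           nabla g \<xi> (\<lambda>y. ricci_sharp g y *v X y) x - ricci_sharp g x *v nabla g \<xi> X x = 0)"
  shows "\<forall>x\<in>U. ricci_mat g x = (- 2 * real n * \<beta>\<^sup>2) *\<^sub>R g x
           \<and> scal g x = - 2 * real n * (2 * real n + 1) * \<beta>\<^sup>2"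
proof -
  have "open U" "riemannian_metric_on U g"
    using assms(1) unfolding weak_beta_kenmotsu_def weak_almost_contact_metric_def by blast+
  then interpret weak_beta_kenmotsu_chart U g n \<beta> f Q \<xi> \<eta>
    using assms(1) by unfold_locales
  show ?thesis
  proof
    fix x assume x: "x \<in> U"
    have einstein: "ricci_mat g x = (- 2 * real n * \<beta>\<^sup>2) *\<^sub>R g x"
      using ricci_mat_eq_Ric[OF x] Ric_einstein[OF x assms(2) sum_xi_Ric_sharp_cov_eq_0[OF assms(3) x]]
      by simp
    then show "ricci_mat g x = (- 2 * real n * \<beta>\<^sup>2) *\<^sub>R g x \<and> scal g x = - 2 * real n * (2 * real n + 1) * \<beta>\<^sup>2"
      using scal_einstein[OF x einstein] card_dim by (simp add: algebra_simps)
  qed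
qed

end
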